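(* Let $\beta>0$, let $m\ge1$, and for integers $1\le a<b<c\le n$ let $N_{a,b,c}$ be the number of triangles in $G^n_{m,\beta}$ on the vertices $w_a,w_b,w_c$. Then \[ \mathbb{E}[N_{a,b,c}]=\left(m(m-1)\frac{(1+\beta)^2}{(2+\beta)^2}+m(m-1)^2\frac{(1+\beta)^3}{(2+\beta)^3}\right)\left(\frac{1}{a^2b^{2+\beta}c^{2+2\beta}}\right)^{1/(2+\beta)}\left(1+O(1/a)\right), \] where the implied constant depends only on $\beta$ and $m$.
   Context: Fix a real $\beta>0$ and a positive integer $m$. The random tree process $(G^n_{1,\beta})_{n\ge1}$ is defined as follows. $G^1_{1,\beta}$ consists of a single vertex $v_1$ and no edges. Given $G^n_{1,\beta}$ with vertices $v_1,\dots,v_n$ and directed edges $e_2,\dots,e_n$ (where $e_i$ is the edge whose tail is $v_i$), $G^{n+1}_{1,\beta}$ is obtained by adding a vertex $v_{n+1}$ and a directed edge $e_{n+1}$ with tail $v_{n+1}$ and head a "target vertex" determined by a random variable $f_{n+1}$, independent of $f_2,\dots,f_n$, taking values in $\Omega_{n+1}=\{(i,v):1\le i\le n\}\cup\{(i,h),(i,t):2\le i\le n\}$ with $\Pr(f_{n+1}=(i,v))=\beta/((2+\beta)n-2)$ and $\Pr(f_{n+1}=(i,h))=\Pr(f_{n+1}=(i,t))=1/((2+\beta)n-2)$. If $f_{n+1}=(i,v)$ the target is $v_i$ (chosen "uniformly"); if $f_{n+1}=(i,h)$ the target is the head of $e_i$, and if $f_{n+1}=(i,t)$ the target is the tail $v_i$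 of $e_i$ (chosen "preferentially", by copying the head half-edge, resp. tail half-edge, of $e_i$). Consequently the target is $v_i$ with probability $(d_n(v_i)+\beta)/((2+\beta)n-2)$, where $d_n(v)$ is the degree of $v$ in $G^n_{1,\beta}$. Each edge is regarded as two half-edges, one at each endpoint; the degree of a vertex is the number of half-edges at it (loops count twice). For $n\ge1$, $G^n_{m,\beta}$ is the undirected multigraph obtained from $G^{nm}_{1,\beta}$ by identifying, for each $j=1,\dots,n$, the vertices $v_{(j-1)m+1},\dots,v_{jm}$ into a single vertex $w_j$, keeping all edges (so loops and multiple edges may occur). A triangle in a multigraph is a set of three edges joining three distinct vertices pairwise; triangles are counted with multiplicity, i.e. the number of triangles on $w_a,w_b,w_c$ is the number of such sets of three edges. *)

theory Defs
  imports "HOL-Probability.Probability"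
begin

text \<open>Elements of \<Omega>_{n+1}: (i,v), (i,h), (i,t).\<close>
datatype choice = ChV nat | ChH nat | ChT nat

text \<open>Weight of a choice in \<Omega>_{n+1} (the step adding vertex n+1 to G^n_{1,beta}).\<close>
definition choice_weight :: "real \<Rightarrow> nat \<Rightarrow> choice \<Rightarrow> real" where
  "choice_weight \<beta> n f = (case f of
      ChV i \<Rightarrow> if 1 \<le> i \<and> i \<le> n then \<beta> / ((2 + \<beta>) * real n - 2) else 0
    | ChH i \<Rightarrow> if 2 \<le> i \<and> i \<le> n then 1 / ((2 + \<beta>) * real n - 2) else 0
    | ChT i \<Rightarrow> if 2 \<le> i \<and> i \<le> n then 1 / ((2 + \<beta>) * real n - 2) else 0)"

definition choice_pmf :: "real \<Rightarrow> nat \<Rightarrow> choice pmf" where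
  "choice_pmf \<beta> n = embed_pmf (choice_weight \<beta> n)"

text \<open>A state of G^N_{1,beta} is the head map: edge e_i (2 \<le> i \<le> N) goes from v_i to v_(hh i).
  Vertices are indexed by 1..N.\<close>
fun target :: "(nat \<Rightarrow> nat) \<Rightarrow> choice \<Rightarrow> nat" where
  "target hh (ChV i) = i"
| "target hh (ChH i) = hh i"
| "target hh (ChT i) = i"

primrec tree_proc :: "real \<Rightarrow> nat \<Rightarrow> (nat \<Rightarrow> nat) pmf" where
  "tree_proc \<beta> 0 = return_pmf (\<lambda>_. 0)"
| "tree_proc \<beta> (Suc k) =
     (if k = 0 then return_pmf (\<lambda>_. 0)
      else bind_pmf (tree_proc \<beta> k)
             (\<lambda>hh. map_pmf (\<lambda>f. hh(Suc k := target hh f)) (choice_pmf \<beta> k)))"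

text \<open>Vertex v_i of G^{nm}_{1,beta} becomes w_j with j = (i-1) div m + 1.\<close>
definition merged :: "nat \<Rightarrow> nat \<Rightarrow> nat" where
  "merged m i = (i - 1) div m + 1"

definition joins :: "nat \<Rightarrow> (nat \<Rightarrow> nat) \<Rightarrow> nat \<Rightarrow> nat \<Rightarrow> nat \<Rightarrow> bool" where
  "joins m hh x p q \<longleftrightarrow>
     (merged m x = p \<and> merged m (hh x) = q) \<or> (merged m x = q \<and> merged m (hh x) = p)"

text \<open>Number of triangles (with multiplicity) on w_a, w_b, w_c in G^n_{m,beta}:
  choices of an edge joining w_a w_b, one joining w_b w_c and one joining w_a w_c
  (for distinct a,b,c these three edges are automatically distinct, so this counts
  the sets of three edges).\<close>
definition triangles :: "nat \<Rightarrow> nat \<Rightarrow> (nat \<Rightarrow> nat) \<Rightarrow> nat \<Rightarrow> nat \<Rightarrow> nat \<Rightarrow> nat" where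
  "triangles m n hh a b c = card {(x, y, z). x \<in> {2..n*m} \<and> y \<in> {2..n*m} \<and> z \<in> {2..n*m} \<and>
      joins m hh x a b \<and> joins m hh y b c \<and> joins m hh z a c}"

definition expected_triangles :: "real \<Rightarrow> nat \<Rightarrow> nat \<Rightarrow> nat \<Rightarrow> nat \<Rightarrow> nat \<Rightarrow> real" where
  "expected_triangles \<beta> m n a b c =
     measure_pmf.expectation (tree_proc \<beta> (n * m)) (\<lambda>hh. real (triangles m n hh a b c))"

definition main_term :: "real \<Rightarrow> nat \<Rightarrow> nat \<Rightarrow> nat \<Rightarrow> nat \<Rightarrow> real" where
  "main_term \<beta> m a b c =
     (real m * (real m - 1) * (1 + \<beta>)^2 / (2 + \<beta>)^2
      + real m * (real m - 1)^2 * (1 + \<beta>)^3 / (2 + \<beta>)^3)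
     * (1 / (real a ^ 2 * real b powr (2 + \<beta>) * real c powr (2 + 2 * \<beta>))) powr (1 / (2 + \<beta>))"

end

theory Submission
  imports Defs
begin

(* A prescription E is a finite set of pairs (e, v), e > v, with
   distinct first components, asking that the head of e_e be v_v.  Weighting the
   indicator of "all decided requirements hold" with rising factorials of the current
   vertex weights (d(v) + beta) of the targets of still-pending requirements gives a
   potential whose expectation is multiplied by an explicit deterministic factor at
   every step.  Hence the probability of E is an explicit product (prescr_prob).

   For prescriptions of at most three edges whose targets are >= a,
   that product equals, up to a factor exp(+-K/a), the product over the edges (e, v)
   of the "ideal" probability (e/v)^(1/(2+beta)) / ((2+beta) e), and replacing e, v
   by the last vertices of their blocks of m costs another such factor.

   A triangle on w_a, w_b, w_c is a triple of edges from the blocks of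
   b and c into the blocks of a and b; summing the estimate of (2) over all these
   triples gives main_term * exp(+-K/a), which is the theorem. *)

lemma ln_one_plus_ge: "(x :: real) \<ge> 0 \<Longrightarrow> ln (1 + x) \<ge> x - x^2"
proof -
  assume x: "x \<ge> 0"
  have "ln (1 / (1 + x)) \<le> 1 / (1 + x) - 1" by (rule ln_le_minus_one) (use x in auto)
  then have l: "ln (1 + x) \<ge> x / (1 + x)" using x by (simp add: ln_div field_simps)
  have "(x - x^2) * (1 + x) = x - x^3"
    by (simp add: algebra_simps power2_eq_square power3_eq_cube)
  also have "\<dots> \<le> x" using x by simp
  finally have "x / (1 + x) \<ge> x - x^2" using x by (simp add: field_simps)
  then show ?thesis using l by linarith
qed

lemma exp_le_one_plus_exp_sq: "(y :: real) \<ge> 0 \<Longrightarrow> exp y \<le> (1 + y) * exp (y^2)"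
proof -
  assume y: "y \<ge> 0"
  then have "exp y \<le> exp (ln (1 + y) + y^2)" using ln_one_plus_ge[OF y] by simp
  also have "\<dots> = (1 + y) * exp (y^2)" using y by (simp add: exp_add)
  finally show ?thesis .
qed

lemma one_plus_power_le_exp: "(x :: real) \<ge> 0 \<Longrightarrow> (1 + x) ^ k \<le> exp (real k * x)"
proof -
  assume x: "x \<ge> 0"
  have "(1 + x) ^ k \<le> exp x ^ k" by (rule power_mono) (use x exp_ge_add_one_self in auto)
  also have "\<dots> = exp (real k * x)" by (simp add: exp_of_nat_mult)
  finally show ?thesis .
qed

lemma exp_minus_one_le: "(y :: real) \<ge> 0 \<Longrightarrow> exp y - 1 \<le> y * exp y"
proof -
  assume y: "y \<ge> 0"
  have "1 - y \<le> exp (- y)" using exp_ge_add_one_self[of "-y"] by simp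
  then have "(1 - y) * exp y \<le> exp (- y) * exp y" by (intro mult_right_mono) auto
  then show ?thesis by (simp add: exp_minus algebra_simps)
qed

lemma ln_close_imp_exp_bounds:
  fixes x y d :: real
  assumes "x > 0" "y > 0" "\<bar>ln x - ln y\<bar> \<le> d"
  shows "x \<le> y * exp d" "y * exp (- d) \<le> x"
proof -
  have "x = y * exp (ln x - ln y)" using assms by (simp add: exp_diff)
  then show "x \<le> y * exp d" "y * exp (- d) \<le> x"
    using assms by (metis abs_le_D1 abs_le_D2 exp_le_cancel_iff mult_left_mono less_imp_le minus_le_iff)+
qed

lemma exp_bounds_imp_relative_error:
  fixes P I K a :: real
  assumes I: "I \<ge> 0" and K: "K \<ge> 0" and a: "a \<ge> 1"
    and lo: "I * exp (- K / a) \<le> P" and up: "P \<le> I * exp (K / a)"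
  shows "\<bar>P - I\<bar> \<le> K * exp K / a * I"
proof -
  have ka: "K / a \<ge> 0" "K / a \<le> K"
    using K a by (auto simp: divide_le_eq mult_le_cancel_left1 mult_le_cancel_left2)
  have "exp (K / a) - 1 \<le> K / a * exp (K / a)" by (rule exp_minus_one_le[OF ka(1)])
  also have "\<dots> \<le> K / a * exp K" using ka by (intro mult_left_mono) auto
  finally have e1: "exp (K / a) - 1 \<le> K * exp K / a" by simp
  have "1 - exp (- K / a) \<le> K / a" using exp_ge_add_one_self[of "- K / a"] by simp
  also have "\<dots> \<le> K * exp K / a" using K a by (intro divide_right_mono) (auto simp: mult_le_cancel_left1)
  finally have e2: "1 - exp (- K / a) \<le> K * exp K / a" .
  have "P - I \<le> I * (exp (K / a) - 1)" using up by (simp add: algebra_simps)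
  also have "\<dots> \<le> I * (K * exp K / a)" using e1 I by (intro mult_left_mono) auto
  finally have u: "P - I \<le> K * exp K / a * I" by (simp add: algebra_simps)
  have "I - P \<le> I * (1 - exp (- K / a))" using lo by (simp add: algebra_simps)
  also have "\<dots> \<le> I * (K * exp K / a)" using e2 I by (intro mult_left_mono) auto
  finally have l: "I - P \<le> K * exp K / a * I" by (simp add: algebra_simps)
  show ?thesis using u l by linarith
qed

lemma sum_relative_error:
  fixes f g :: "'a \<Rightarrow> real"
  assumes "\<And>t. t \<in> S \<Longrightarrow> \<bar>f t - g t\<bar> \<le> c * g t"
  shows "\<bar>sum f S - sum g S\<bar> \<le> c * sum g S"
proof -
  have "\<bar>sum f S - sum g S\<bar> = \<bar>\<Sum>t\<in>S. f t - g t\<bar>" by (simp add: sum_subtractf)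
  also have "\<dots> \<le> (\<Sum>t\<in>S. \<bar>f t - g t\<bar>)" by (rule sum_abs)
  also have "\<dots> \<le> (\<Sum>t\<in>S. c * g t)" by (rule sum_mono) (rule assms)
  also have "\<dots> = c * sum g S" by (simp add: sum_distrib_left)
  finally show ?thesis .
qed

lemma sum_inverse_squares_telescope:
  assumes "1 \<le> v" "v \<le> e"
  shows "(\<Sum>s\<in>{v..<e}. 1 / real s ^ 2) \<le> 2 / real v - 2 / real e"
  using assms(2)
proof (induction e rule: dec_induct)
  case (step e)
  have e1: "real e \<ge> 1" using step assms by simp
  have "real e * (real e + 1) \<le> 2 * real e ^ 2" using e1 by (simp add: power2_eq_square algebra_simps)
  then have "2 / (2 * real e ^ 2) \<le> 2 / (real e * (real e + 1))" using e1 by (intro frac_le) auto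
  also have "2 / (real e * (real e + 1)) = 2 / real e - 2 / real (Suc e)" using e1 by (simp add: field_simps)
  finally show ?case using step by simp
qed simp

lemma sum_inverse_squares:
  assumes "1 \<le> v"
  shows "(\<Sum>s\<in>{v..<e}. 1 / real s ^ 2) \<le> 2 / real v"
proof (cases "v \<le> e")
  case True
  moreover have "2 / real e \<ge> 0" by simp
  ultimately show ?thesis using sum_inverse_squares_telescope[OF assms True] by linarith
qed simp

lemma sum_ln_telescope:
  assumes "1 \<le> v" "v \<le> e"
  shows "(\<Sum>s\<in>{v..<e}. ln (1 + 1 / real s)) = ln (real e) - ln (real v)"
  using assms(2)
proof (induction e rule: dec_induct)
  case (step e)
  have e1: "real e \<ge> 1" using step assms by simp
  have "1 + 1 / real e = real (Suc e) / real e" using e1 by (simp add: field_simps)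
  then have "ln (1 + 1 / real e) = ln (real (Suc e)) - ln (real e)" using e1 by (simp add: ln_div)
  then show ?case using step by simp
qed simp

section \<open>The law of a single step\<close>

text \<open>Normalising constant of the step that adds vertex t+1: the total weight of the
  choices in Omega_(t+1).\<close>
definition denom :: "real \<Rightarrow> nat \<Rightarrow> real" where
  "denom \<beta> t = (2 + \<beta>) * real t - 2"

definition choice_set :: "nat \<Rightarrow> choice set" where
  "choice_set k = ChV ` {1..k} \<union> ChH ` {2..k} \<union> ChT ` {2..k}"

lemma denom_pos:
  assumes "\<beta> > 0" "k \<ge> 1"
  shows "denom \<beta> k > 0"
proof -
  have "(2 + \<beta>) * real k \<ge> 2 + \<beta>"
    using assms by (simp add: mult_le_cancel_left1)
  then show ?thesis using assms unfolding denom_def by linarith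
qed

lemma denom_ge: "\<beta> > 0 \<Longrightarrow> s \<ge> 1 \<Longrightarrow> denom \<beta> s \<ge> \<beta> * real s"
  unfolding denom_def by (simp add: algebra_simps)

lemma finite_choice_set: "finite (choice_set k)"
  unfolding choice_set_def by auto

lemma choice_weight_nonneg: "\<beta> > 0 \<Longrightarrow> k \<ge> 1 \<Longrightarrow> choice_weight \<beta> k f \<ge> 0"
  using denom_pos[of \<beta> k] unfolding choice_weight_def denom_def by (auto split: choice.splits)

lemma choice_weight_outside: "f \<notin> choice_set k \<Longrightarrow> choice_weight \<beta> k f = 0"
  unfolding choice_weight_def choice_set_def by (auto split: choice.splits)

lemma sum_choice_set:
  fixes g :: "choice \<Rightarrow> real"
  shows "(\<Sum>f\<in>choice_set k. g f)
       = (\<Sum>i\<in>{1..k}. g (ChV i)) + (\<Sum>i\<in>{2..k}. g (ChH i)) + (\<Sum>i\<in>{2..k}. g (ChT i))"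
proof -
  have d1: "ChV ` {1..k} \<inter> (ChH ` {2..k} \<union> ChT ` {2..k}) = {}" by auto
  have d2: "ChH ` {2..k} \<inter> ChT ` {2..k} = {}" by auto
  have "(\<Sum>f\<in>choice_set k. g f)
      = (\<Sum>f\<in>ChV ` {1..k}. g f) + (\<Sum>f\<in>ChH ` {2..k} \<union> ChT ` {2..k}. g f)"
    unfolding choice_set_def by (subst Un_assoc, rule sum.union_disjoint) (use d1 in auto)
  also have "(\<Sum>f\<in>ChH ` {2..k} \<union> ChT ` {2..k}. g f)
           = (\<Sum>f\<in>ChH ` {2..k}. g f) + (\<Sum>f\<in>ChT ` {2..k}. g f)"
    by (rule sum.union_disjoint) (use d2 in auto)
  finally show ?thesis by (simp add: sum.reindex inj_on_def)
qed

lemma choice_weight_sum: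
  assumes "\<beta> > 0" "k \<ge> 1"
  shows "(\<Sum>f\<in>choice_set k. choice_weight \<beta> k f) = 1"
proof -
  have "(\<Sum>f\<in>choice_set k. choice_weight \<beta> k f)
      = real k * \<beta> / denom \<beta> k + real (k-1) / denom \<beta> k + real (k-1) / denom \<beta> k"
    unfolding sum_choice_set by (simp add: choice_weight_def denom_def)
  also have "\<dots> = (real k * \<beta> + 2 * real (k-1)) / denom \<beta> k"
    by (simp add: add_divide_distrib)
  also have "real k * \<beta> + 2 * real (k-1) = denom \<beta> k"
    using assms unfolding denom_def by (simp add: of_nat_diff algebra_simps)
  finally show ?thesis using denom_pos[OF assms] by simp
qed

lemma pmf_choice:
  assumes "\<beta> > 0" "k \<ge> 1"
  shows "pmf (choice_pmf \<beta> k) f = choice_weight \<beta> k f"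
  unfolding choice_pmf_def
proof (rule pmf_embed_pmf)
  show "\<And>x. 0 \<le> choice_weight \<beta> k x" using choice_weight_nonneg assms by auto
  have "(\<integral>\<^sup>+x. ennreal (choice_weight \<beta> k x) \<partial>count_space UNIV)
      = (\<Sum>x\<in>choice_set k. ennreal (choice_weight \<beta> k x))"
    by (rule nn_integral_count_space') (auto simp: finite_choice_set choice_weight_outside)
  also have "\<dots> = ennreal (\<Sum>x\<in>choice_set k. choice_weight \<beta> k x)"
    by (rule sum_ennreal) (use choice_weight_nonneg assms in auto)
  finally show "(\<integral>\<^sup>+x. ennreal (choice_weight \<beta> k x) \<partial>count_space UNIV) = 1"
    using choice_weight_sum[OF assms] by simp
qed

lemma set_choice:
  assumes "\<beta> > 0" "k \<ge> 1"
  shows "set_pmf (choice_pmf \<beta> k) \<subseteq> choice_set k"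
  using choice_weight_outside pmf_choice[OF assms] by (auto simp: set_pmf_eq)

lemma expectation_choice:
  assumes "\<beta> > 0" "k \<ge> 1"
  shows "measure_pmf.expectation (choice_pmf \<beta> k) (h :: choice \<Rightarrow> real)
       = (\<Sum>f\<in>choice_set k. choice_weight \<beta> k f * h f)"
  by (subst integral_measure_pmf[of "choice_set k"])
     (use set_choice[OF assms] pmf_choice[OF assms] finite_choice_set in auto)

section \<open>The tree process\<close>

definition heads_below :: "nat \<Rightarrow> (nat \<Rightarrow> nat) \<Rightarrow> bool" where
  "heads_below t hh \<longleftrightarrow> (\<forall>j\<in>{2..t}. 1 \<le> hh j \<and> hh j < j)"

text \<open>In-degree of v_u in G^t_{1,beta}, and its attachment weight d_t(v_u) + beta:
  every vertex other than v_1 also carries the tail of its own edge.\<close>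
definition indeg :: "(nat \<Rightarrow> nat) \<Rightarrow> nat \<Rightarrow> nat \<Rightarrow> nat" where
  "indeg hh t u = card {j\<in>{2..t}. hh j = u}"

definition weight :: "real \<Rightarrow> (nat \<Rightarrow> nat) \<Rightarrow> nat \<Rightarrow> nat \<Rightarrow> real" where
  "weight \<beta> hh t u = real (indeg hh t u) + (if 2 \<le> u then 1 else 0) + \<beta>"

lemma finite_tree:
  assumes "\<beta> > 0"
  shows "finite (set_pmf (tree_proc \<beta> t))"
proof (induction t)
  case 0
  then show ?case by simp
next
  case (Suc k)
  show ?case
  proof (cases "k = 0")
    case False
    have "finite (set_pmf (choice_pmf \<beta> k))"
      using set_choice[OF assms, of k] False finite_choice_set finite_subset by auto
    then show ?thesis using False Suc by (simp add: set_bind_pmf)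
  qed simp
qed

lemma target_range:
  "heads_below k hh \<Longrightarrow> f \<in> choice_set k \<Longrightarrow> 1 \<le> target hh f \<and> target hh f \<le> k"
  unfolding heads_below_def choice_set_def by (cases f) auto

lemma heads_below_tree:
  assumes "\<beta> > 0" and "hh \<in> set_pmf (tree_proc \<beta> t)"
  shows "heads_below t hh"
  using assms(2)
proof (induction t arbitrary: hh)
  case 0
  then show ?case by (simp add: heads_below_def)
next
  case (Suc k)
  show ?case
  proof (cases "k = 0")
    case False
    then obtain h0 f where h0: "h0 \<in> set_pmf (tree_proc \<beta> k)"
      and f: "f \<in> set_pmf (choice_pmf \<beta> k)" and hh: "hh = h0(Suc k := target h0 f)"
      using Suc.prems by (auto simp: set_bind_pmf)
    have i0: "heads_below k h0" using Suc.IH h0 by auto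
    have "f \<in> choice_set k" using set_choice[OF assms(1), of k] False f by auto
    then have "1 \<le> target h0 f \<and> target h0 f \<le> k" using target_range i0 by auto
    then show ?thesis using i0 unfolding hh heads_below_def by auto
  qed (simp add: heads_below_def)
qed

lemma sum_over_heads:
  assumes "heads_below k hh"
  shows "(\<Sum>i\<in>{2..k}. (\<phi> :: nat \<Rightarrow> real) (hh i)) = (\<Sum>u\<in>{1..k}. real (indeg hh k u) * \<phi> u)"
proof -
  have "hh ` {2..k} \<subseteq> {1..k}"
  proof
    fix x assume "x \<in> hh ` {2..k}"
    then obtain j where "j \<in> {2..k}" "x = hh j" by auto
    then show "x \<in> {1..k}" using assms unfolding heads_below_def by fastforce
  qed
  then have "(\<Sum>i\<in>{2..k}. \<phi> (hh i)) = (\<Sum>u\<in>{1..k}. \<Sum>i\<in>{j\<in>{2..k}. hh j = u}. \<phi> (hh i))"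
    by (intro sum.group[symmetric]) auto
  also have "\<dots> = (\<Sum>u\<in>{1..k}. real (indeg hh k u) * \<phi> u)"
    by (rule sum.cong) (auto simp: indeg_def)
  finally show ?thesis .
qed

lemma sum_from_two:
  "(\<Sum>u\<in>{1..k}. if 2 \<le> u then (\<phi> :: nat \<Rightarrow> real) u else 0) = (\<Sum>u\<in>{2..k}. \<phi> u)"
proof -
  have "(\<Sum>u\<in>{1..k}. if 2 \<le> u then \<phi> u else 0) = (\<Sum>u\<in>{u\<in>{1..k}. 2 \<le> u}. \<phi> u)"
    by (rule sum.inter_filter[symmetric]) auto
  also have "{u\<in>{1..k}. 2 \<le> u} = {2..k}" by auto
  finally show ?thesis .
qed

lemma expectation_target:
  assumes b: "\<beta> > 0" and k: "k \<ge> 1" and iv: "heads_below k hh"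
  shows "measure_pmf.expectation (choice_pmf \<beta> k) (\<lambda>f. (\<phi> :: nat \<Rightarrow> real) (target hh f))
       = (\<Sum>u\<in>{1..k}. weight \<beta> hh k u * \<phi> u) / denom \<beta> k"
proof -
  have "measure_pmf.expectation (choice_pmf \<beta> k) (\<lambda>f. \<phi> (target hh f))
      = (\<Sum>f\<in>choice_set k. choice_weight \<beta> k f * \<phi> (target hh f))"
    by (rule expectation_choice[OF b k])
  also have "\<dots> = (\<beta> * (\<Sum>i\<in>{1..k}. \<phi> i) + (\<Sum>i\<in>{2..k}. \<phi> (hh i)) + (\<Sum>i\<in>{2..k}. \<phi> i))
                  / denom \<beta> k"
    unfolding sum_choice_set
    by (simp add: choice_weight_def denom_def sum_distrib_left add_divide_distrib sum_divide_distrib)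
  also have "\<dots> = (\<Sum>u\<in>{1..k}. weight \<beta> hh k u * \<phi> u) / denom \<beta> k"
  proof -
    have pw: "weight \<beta> hh k u * \<phi> u
        = real (indeg hh k u) * \<phi> u + (if 2 \<le> u then \<phi> u else 0) + \<beta> * \<phi> u" for u
      unfolding weight_def by (simp add: algebra_simps)
    show ?thesis
      unfolding pw sum.distrib sum_from_two sum_over_heads[OF iv] sum_distrib_left[symmetric]
      by (simp add: algebra_simps)
  qed
  finally show ?thesis .
qed

lemma sum_weight:
  assumes "heads_below k hh" and "k \<ge> 1"
  shows "(\<Sum>u\<in>{1..k}. weight \<beta> hh k u) = denom \<beta> k"
proof -
  have "(\<Sum>u\<in>{1..k}. real (indeg hh k u)) = real (k - 1)"
    using sum_over_heads[OF assms(1), where \<phi>="\<lambda>_. 1"] by simp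
  moreover have "(\<Sum>u\<in>{1..k}. if 2 \<le> u then 1 else 0 :: real) = real (k - 1)"
    using sum_from_two[where k=k and \<phi>="\<lambda>_. 1"] by simp
  ultimately show ?thesis
    unfolding weight_def sum.distrib using assms(2) by (cases k) (auto simp: denom_def algebra_simps)
qed

section \<open>Exact probability of a prescribed set of edges\<close>

text \<open>A prescription is a finite set of requirements (e, v), "the head of e_e is v_v",
  with 1 <= v < e and at most one requirement per edge.\<close>
definition prescription :: "(nat \<times> nat) set \<Rightarrow> bool" where
  "prescription E \<longleftrightarrow> finite E \<and> (\<forall>p\<in>E. 1 \<le> snd p \<and> snd p < fst p)
     \<and> (\<forall>p\<in>E. \<forall>q\<in>E. fst p = fst q \<longrightarrow> p = q)"

definition pending :: "(nat \<times> nat) set \<Rightarrow> nat \<Rightarrow> nat \<Rightarrow> nat" where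
  "pending E t u = card {p\<in>E. snd p = u \<and> t < fst p}"

definition decided_at :: "(nat \<times> nat) set \<Rightarrow> nat \<Rightarrow> bool" where
  "decided_at E t \<longleftrightarrow> (\<exists>p\<in>E. fst p = Suc t)"

definition agrees :: "(nat \<times> nat) set \<Rightarrow> nat \<Rightarrow> (nat \<Rightarrow> nat) \<Rightarrow> real" where
  "agrees E t hh = (\<Prod>p\<in>E. if fst p \<le> t then (if hh (fst p) = snd p then 1 else 0) else 1)"

text \<open>The potential: the indicator weighted by rising factorials of the current weights
  of the targets of pending requirements.  Its expectation evolves deterministically.\<close>
definition potential :: "real \<Rightarrow> (nat \<times> nat) set \<Rightarrow> nat \<Rightarrow> (nat \<Rightarrow> nat) \<Rightarrow> real" where
  "potential \<beta> E t hh = agrees E t hh * (\<Prod>u\<in>{1..t}. pochhammer (weight \<beta> hh t u) (pending E t u))"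

definition step_factor :: "real \<Rightarrow> (nat \<times> nat) set \<Rightarrow> nat \<Rightarrow> real" where
  "step_factor \<beta> E s = (if decided_at E s then 1 / denom \<beta> s
                         else 1 + real (\<Sum>u\<in>{1..s}. pending E s u) / denom \<beta> s)"

definition init_weight :: "real \<Rightarrow> nat \<Rightarrow> real" where
  "init_weight \<beta> u = (if u = 1 then \<beta> else 1 + \<beta>)"

definition init_factor :: "real \<Rightarrow> (nat \<times> nat) set \<Rightarrow> nat \<Rightarrow> real" where
  "init_factor \<beta> E t = (\<Prod>u\<in>{1..t}. pochhammer (init_weight \<beta> u) (pending E u u))"

text \<open>The exact probability that G^N_{1,beta} satisfies E (lemma prescription_probability).\<close>
definition prescr_prob :: "real \<Rightarrow> nat \<Rightarrow> (nat \<times> nat) set \<Rightarrow> real" where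
  "prescr_prob \<beta> N E = init_factor \<beta> E N * (\<Prod>s\<in>{1..<N}. step_factor \<beta> E s)"

lemma pochhammer_shift: "(x :: real) * pochhammer (x + 1) k = pochhammer x k * (x + real k)"
  by (metis pochhammer_Suc pochhammer_rec)

lemma indeg_upd:
  assumes "t \<ge> 1"
  shows "indeg (hh(Suc t := \<tau>)) (Suc t) u = indeg hh t u + (if \<tau> = u then 1 else 0)"
proof -
  have "{j\<in>{2..Suc t}. (hh(Suc t := \<tau>)) j = u}
      = {j\<in>{2..t}. hh j = u} \<union> (if \<tau> = u then {Suc t} else {})"
    using assms by (auto simp: le_Suc_eq)
  then show ?thesis unfolding indeg_def by (auto simp: card_insert_if)
qed

lemma indeg_new:
  assumes "heads_below t hh" and "\<tau> \<le> t"
  shows "indeg (hh(Suc t := \<tau>)) (Suc t) (Suc t) = 0"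
proof -
  have "(hh(Suc t := \<tau>)) j \<noteq> Suc t" if "j \<in> {2..Suc t}" for j
  proof (cases "j = Suc t")
    case False
    then have "j \<in> {2..t}" using that by auto
    then show ?thesis using False assms(1) unfolding heads_below_def by fastforce
  qed (use assms(2) in simp)
  then have "{j\<in>{2..Suc t}. (hh(Suc t := \<tau>)) j = Suc t} = {}" by blast
  then show ?thesis unfolding indeg_def by simp
qed

lemma weight_upd:
  "t \<ge> 1 \<Longrightarrow> weight \<beta> (hh(Suc t := \<tau>)) (Suc t) u = weight \<beta> hh t u + (if \<tau> = u then 1 else 0)"
  using indeg_upd[of t hh \<tau> u] unfolding weight_def by auto

lemma weight_new:
  assumes "heads_below t hh" "\<tau> \<le> t" "t \<ge> 1"
  shows "weight \<beta> (hh(Suc t := \<tau>)) (Suc t) (Suc t) = 1 + \<beta>"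
  using indeg_new[OF assms(1,2)] assms(3) unfolding weight_def by auto

lemma agrees_upd:
  assumes "finite E"
  shows "agrees E (Suc t) (hh(Suc t := \<tau>))
       = agrees E t hh * (\<Prod>p\<in>E. if fst p = Suc t then (if \<tau> = snd p then 1 else 0) else 1)"
  unfolding agrees_def prod.distrib[symmetric] by (rule prod.cong) (auto simp: le_Suc_eq)

lemma potential_extend:
  assumes iv: "heads_below t hh" and t1: "t \<ge> 1" and u: "u \<in> {1..t}" and fE: "finite E"
  shows "potential \<beta> E (Suc t) (hh(Suc t := u)) = agrees E t hh
      * (\<Prod>p\<in>E. if fst p = Suc t then (if u = snd p then 1 else 0) else 1)
      * (\<Prod>u'\<in>{1..t}. pochhammer (weight \<beta> hh t u' + (if u' = u then 1 else 0))
                                   (pending E (Suc t) u'))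
      * pochhammer (1 + \<beta>) (pending E (Suc t) (Suc t))"
proof -
  have ut: "u \<le> t" using u by auto
  have "{1..Suc t} = insert (Suc t) {1..t}" by auto
  then have "(\<Prod>u'\<in>{1..Suc t}. pochhammer (weight \<beta> (hh(Suc t := u)) (Suc t) u') (pending E (Suc t) u'))
      = pochhammer (weight \<beta> (hh(Suc t := u)) (Suc t) (Suc t)) (pending E (Suc t) (Suc t)) *
        (\<Prod>u'\<in>{1..t}. pochhammer (weight \<beta> (hh(Suc t := u)) (Suc t) u') (pending E (Suc t) u'))"
    by simp
  also have "\<dots> = pochhammer (1 + \<beta>) (pending E (Suc t) (Suc t)) *
        (\<Prod>u'\<in>{1..t}. pochhammer (weight \<beta> hh t u' + (if u' = u then 1 else 0)) (pending E (Suc t) u'))"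
    using weight_new[OF iv ut t1] weight_upd[OF t1] by (auto intro!: prod.cong)
  finally show ?thesis unfolding potential_def agrees_upd[OF fE] by (simp add: algebra_simps)
qed

lemma undecided_step:
  assumes "\<not> decided_at E t"
  shows "(\<Prod>p\<in>E. if fst p = Suc t then (if u = snd p then 1 else 0) else (1 :: real)) = 1"
    and "pending E (Suc t) v = pending E t v"
proof -
  show "(\<Prod>p\<in>E. if fst p = Suc t then (if u = snd p then 1 else 0) else (1 :: real)) = 1"
    using assms unfolding decided_at_def by (auto intro!: prod.neutral)
  have "Suc t < fst p \<longleftrightarrow> t < fst p" if "p \<in> E" for p
    using assms that unfolding decided_at_def by (metis Suc_lessD Suc_lessI)
  then have "{p\<in>E. snd p = v \<and> Suc t < fst p} = {p\<in>E. snd p = v \<and> t < fst p}" by blast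
  then show "pending E (Suc t) v = pending E t v" unfolding pending_def by simp
qed

lemma decided_step:
  assumes gE: "prescription E" and p0: "(Suc t, v0) \<in> E"
  shows "(\<Prod>p\<in>E. if fst p = Suc t then (if u = snd p then 1 else 0) else (1 :: real))
       = (if u = v0 then 1 else 0)"
    and "pending E (Suc t) v = pending E t v - (if v = v0 then 1 else 0)"
    and "pending E t v0 \<ge> 1"
proof -
  have fE: "finite E" using gE unfolding prescription_def by auto
  have uniq: "p \<in> E \<Longrightarrow> fst p = Suc t \<Longrightarrow> p = (Suc t, v0)" for p
    using gE p0 unfolding prescription_def by auto
  have "(\<Prod>p\<in>E. if fst p = Suc t then (if u = snd p then 1 else 0) else (1 :: real))
      = (if u = v0 then 1 else 0)
        * (\<Prod>p\<in>E-{(Suc t, v0)}. if fst p = Suc t then (if u = snd p then 1 else 0) else (1 :: real))"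
    by (simp add: prod.remove[OF fE p0])
  also have "(\<Prod>p\<in>E-{(Suc t, v0)}. if fst p = Suc t then (if u = snd p then 1 else 0) else (1 :: real)) = 1"
    using uniq by (intro prod.neutral) auto
  finally show "(\<Prod>p\<in>E. if fst p = Suc t then (if u = snd p then 1 else 0) else (1 :: real))
       = (if u = v0 then 1 else 0)" by simp
  have "t < fst p \<longleftrightarrow> Suc t < fst p \<or> p = (Suc t, v0)" if "p \<in> E" for p
    using uniq[OF that] by (metis Suc_lessD Suc_lessI lessI fst_conv)
  then have split: "{p\<in>E. snd p = v \<and> t < fst p}
      = {p\<in>E. snd p = v \<and> Suc t < fst p} \<union> (if v = v0 then {(Suc t, v0)} else {})"
    using p0 by auto
  have "finite {p\<in>E. snd p = v \<and> Suc t < fst p}" using fE by auto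
  then show "pending E (Suc t) v = pending E t v - (if v = v0 then 1 else 0)"
    unfolding pending_def split by (auto simp: card_insert_if)
  have "(Suc t, v0) \<in> {p\<in>E. snd p = v0 \<and> t < fst p}" using p0 by auto
  then show "pending E t v0 \<ge> 1"
    unfolding pending_def using fE by (metis (no_types, lifting) One_nat_def Suc_leI card_gt_0_iff
        empty_iff finite_subset mem_Collect_eq subsetI)
qed

text \<open>The weighted sum of the potentials over the possible targets of e_(t+1), when that
  edge carries no requirement: each pending requirement on v_u gains one factor.\<close>
lemma weighted_potential_undecided:
  assumes iv: "heads_below t hh" and t1: "t \<ge> 1" and fE: "finite E" and nd: "\<not> decided_at E t"
  shows "(\<Sum>u\<in>{1..t}. weight \<beta> hh t u * potential \<beta> E (Suc t) (hh(Suc t := u)))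
       = pochhammer (1 + \<beta>) (pending E (Suc t) (Suc t)) * potential \<beta> E t hh
         * (denom \<beta> t + real (\<Sum>u\<in>{1..t}. pending E t u))"
proof -
  define w where "w = weight \<beta> hh t"
  define k where "k = pending E t"
  define c where "c = agrees E t hh * pochhammer (1 + \<beta>) (pending E (Suc t) (Suc t))"
  define P where "P = (\<Prod>u'\<in>{1..t}. pochhammer (w u') (k u'))"
  have summand: "w u * potential \<beta> E (Suc t) (hh(Suc t := u)) = c * P * (w u + real (k u))"
    if u: "u \<in> {1..t}" for u
  proof -
    define R where "R = (\<Prod>u'\<in>{1..t}-{u}. pochhammer (w u') (k u'))"
    have "(\<Prod>u'\<in>{1..t}. pochhammer (w u' + (if u' = u then 1 else 0)) (k u'))
        = pochhammer (w u + 1) (k u) * R"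
      unfolding R_def using u by (subst prod.remove[of _ u]) (auto intro!: prod.cong)
    then have "potential \<beta> E (Suc t) (hh(Suc t := u)) = c * (pochhammer (w u + 1) (k u) * R)"
      unfolding potential_extend[OF iv t1 u fE] undecided_step[OF nd] c_def w_def k_def
      by (simp add: ac_simps)
    then have "w u * potential \<beta> E (Suc t) (hh(Suc t := u))
        = c * R * (w u * pochhammer (w u + 1) (k u))" by (simp add: ac_simps)
    also have "\<dots> = c * (pochhammer (w u) (k u) * R) * (w u + real (k u))"
      unfolding pochhammer_shift by (simp add: ac_simps)
    also have "pochhammer (w u) (k u) * R = P"
      unfolding P_def R_def using u by (subst prod.remove[of _ u]) auto
    finally show ?thesis by (simp only: mult_ac)
  qed
  have "(\<Sum>u\<in>{1..t}. w u * potential \<beta> E (Suc t) (hh(Suc t := u)))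
      = c * P * ((\<Sum>u\<in>{1..t}. w u) + real (\<Sum>u\<in>{1..t}. k u))"
    by (simp add: summand sum_distrib_left sum.distrib algebra_simps)
  also have "(\<Sum>u\<in>{1..t}. w u) = denom \<beta> t" unfolding w_def by (rule sum_weight[OF iv t1])
  finally show ?thesis
    unfolding w_def k_def c_def P_def potential_def by (simp add: algebra_simps)
qed

text \<open>When e_(t+1) is required to end at v_v0, only that target survives, and it consumes
  one factor of the rising factorial of v_v0.\<close>
lemma weighted_potential_decided:
  assumes iv: "heads_below t hh" and t1: "t \<ge> 1" and gE: "prescription E"
    and p0: "(Suc t, v0) \<in> E"
  shows "(\<Sum>u\<in>{1..t}. weight \<beta> hh t u * potential \<beta> E (Suc t) (hh(Suc t := u)))
       = pochhammer (1 + \<beta>) (pending E (Suc t) (Suc t)) * potential \<beta> E t hh"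
proof -
  have fE: "finite E" using gE unfolding prescription_def by auto
  have v0: "v0 \<in> {1..t}" using gE p0 unfolding prescription_def by force
  define w where "w = weight \<beta> hh t"
  define k where "k = pending E t"
  define c where "c = agrees E t hh * pochhammer (1 + \<beta>) (pending E (Suc t) (Suc t))"
  define R where "R = (\<Prod>u'\<in>{1..t}-{v0}. pochhammer (w u') (k u'))"
  note ds = decided_step[OF gE p0]
  have "(\<Sum>u\<in>{1..t}. w u * potential \<beta> E (Suc t) (hh(Suc t := u)))
      = w v0 * potential \<beta> E (Suc t) (hh(Suc t := v0))"
    using v0 by (subst sum.remove[of _ v0])
      (auto simp: potential_extend[OF iv t1 _ fE] ds(1) intro!: sum.neutral)
  also have "\<dots> = c * (w v0 * pochhammer (w v0 + 1) (k v0 - 1)) * R"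
  proof -
    have "(\<Prod>u'\<in>{1..t}. pochhammer (w u' + (if u' = v0 then 1 else 0)) (pending E (Suc t) u'))
        = pochhammer (w v0 + 1) (k v0 - 1) * R"
      using v0 ds(2) unfolding R_def k_def by (subst prod.remove[of _ v0]) (auto intro!: prod.cong)
    then show ?thesis
      unfolding potential_extend[OF iv t1 v0 fE] ds(1) c_def w_def by (simp add: algebra_simps)
  qed
  also have "w v0 * pochhammer (w v0 + 1) (k v0 - 1) = pochhammer (w v0) (k v0)"
    using ds(3) pochhammer_rec[of "w v0" "k v0 - 1"] unfolding k_def by simp
  also have "c * pochhammer (w v0) (k v0) * R
      = pochhammer (1 + \<beta>) (pending E (Suc t) (Suc t)) * potential \<beta> E t hh"
    unfolding potential_def c_def R_def w_def k_def using v0 by (subst prod.remove[of _ v0]) auto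
  finally show ?thesis unfolding w_def .
qed

lemma potential_step:
  assumes b: "\<beta> > 0" and t1: "t \<ge> 1" and iv: "heads_below t hh" and gE: "prescription E"
  shows "measure_pmf.expectation (choice_pmf \<beta> t)
           (\<lambda>f. potential \<beta> E (Suc t) (hh(Suc t := target hh f)))
       = step_factor \<beta> E t * pochhammer (1 + \<beta>) (pending E (Suc t) (Suc t)) * potential \<beta> E t hh"
proof -
  have fE: "finite E" using gE unfolding prescription_def by auto
  have D: "denom \<beta> t > 0" using denom_pos b t1 by auto
  have "measure_pmf.expectation (choice_pmf \<beta> t)
          (\<lambda>f. potential \<beta> E (Suc t) (hh(Suc t := target hh f)))
      = (\<Sum>u\<in>{1..t}. weight \<beta> hh t u * potential \<beta> E (Suc t) (hh(Suc t := u))) / denom \<beta> t"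
    by (rule expectation_target[OF b t1 iv])
  also have "\<dots> = step_factor \<beta> E t * pochhammer (1 + \<beta>) (pending E (Suc t) (Suc t)) * potential \<beta> E t hh"
  proof (cases "decided_at E t")
    case True
    then obtain v0 where "(Suc t, v0) \<in> E" unfolding decided_at_def by force
    then show ?thesis
      unfolding weighted_potential_decided[OF iv t1 gE \<open>(Suc t, v0) \<in> E\<close>] step_factor_def
      using True by simp
  next
    case False
    then show ?thesis
      unfolding weighted_potential_undecided[OF iv t1 fE False] step_factor_def
      using D by (simp add: field_simps)
  qed
  finally show ?thesis .
qed

lemma expectation_potential:
  assumes b: "\<beta> > 0" and gE: "prescription E" and "t \<ge> 1"
  shows "measure_pmf.expectation (tree_proc \<beta> t) (potential \<beta> E t) = prescr_prob \<beta> t E"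
  using \<open>t \<ge> 1\<close>
proof (induction t rule: dec_induct)
  case base
  have "agrees E 1 (\<lambda>_. 0) = 1"
    unfolding agrees_def using gE unfolding prescription_def by (intro prod.neutral) force
  moreover have "weight \<beta> (\<lambda>_. 0) 1 1 = \<beta>" unfolding weight_def indeg_def by simp
  ultimately show ?case
    by (simp add: potential_def prescr_prob_def init_factor_def init_weight_def)
next
  case (step t)
  have t1: "t \<ge> 1" using step by simp
  define A where "A = set_pmf (tree_proc \<beta> t)"
  define c where "c = step_factor \<beta> E t * pochhammer (1 + \<beta>) (pending E (Suc t) (Suc t))"
  have fA: "finite A" unfolding A_def using finite_tree[OF b] .
  have fC: "finite (set_pmf (choice_pmf \<beta> t))"
    using set_choice[OF b t1] finite_choice_set finite_subset by blast
  have "tree_proc \<beta> (Suc t)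
      = bind_pmf (tree_proc \<beta> t) (\<lambda>hh. map_pmf (\<lambda>f. hh(Suc t := target hh f)) (choice_pmf \<beta> t))"
    using t1 by simp
  then have "measure_pmf.expectation (tree_proc \<beta> (Suc t)) (potential \<beta> E (Suc t))
      = (\<Sum>hh\<in>A. pmf (tree_proc \<beta> t) hh *\<^sub>R measure_pmf.expectation
           (map_pmf (\<lambda>f. hh(Suc t := target hh f)) (choice_pmf \<beta> t)) (potential \<beta> E (Suc t)))"
    by (simp only:) (rule pmf_expectation_bind; use fA fC in \<open>auto simp: A_def\<close>)
  also have "\<dots> = (\<Sum>hh\<in>A. pmf (tree_proc \<beta> t) hh * (c * potential \<beta> E t hh))"
    using potential_step[OF b t1 heads_below_tree[OF b] gE] by (intro sum.cong) (auto simp: A_def c_def)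
  also have "\<dots> = c * measure_pmf.expectation (tree_proc \<beta> t) (potential \<beta> E t)"
    using fA by (simp add: integral_measure_pmf[of A] A_def sum_distrib_left algebra_simps)
  also have "\<dots> = prescr_prob \<beta> (Suc t) E"
  proof -
    have "init_factor \<beta> E (Suc t) = pochhammer (1 + \<beta>) (pending E (Suc t) (Suc t)) * init_factor \<beta> E t"
      unfolding init_factor_def using t1 by (simp add: atLeastAtMostSuc_conv init_weight_def)
    moreover have "(\<Prod>s\<in>{1..<Suc t}. step_factor \<beta> E s) = step_factor \<beta> E t * (\<Prod>s\<in>{1..<t}. step_factor \<beta> E s)"
      using t1 by (simp add: atLeastLessThanSuc)
    ultimately show ?thesis unfolding step.IH c_def prescr_prob_def by simp
  qed
  finally show ?case .
qed

text \<open>Exact formula: once all prescribed edges exist, the potential is the indicator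
  of the prescription, so prescr_prob is the probability that G^N_{1,beta} satisfies E.\<close>
lemma prescription_probability:
  assumes b: "\<beta> > 0" and gE: "prescription E" and N: "N \<ge> 1" and EN: "\<forall>p\<in>E. fst p \<le> N"
  shows "measure_pmf.expectation (tree_proc \<beta> N) (\<lambda>hh. \<Prod>p\<in>E. of_bool (hh (fst p) = snd p))
       = prescr_prob \<beta> N E"
proof -
  have "{p\<in>E. snd p = u \<and> N < fst p} = {}" for u using EN by auto
  then have "pending E N u = 0" for u unfolding pending_def by (simp only: card.empty)
  then have "potential \<beta> E N = (\<lambda>hh. \<Prod>p\<in>E. of_bool (hh (fst p) = snd p))"
    using EN by (auto simp: fun_eq_iff potential_def agrees_def intro!: prod.cong)
  then show ?thesis using expectation_potential[OF b gE N] by simp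
qed

section \<open>Comparison with independent edges\<close>

text \<open>The contribution of one requirement p = (e, v) to the step from time s if the
  requirements did not interact: 1/denom when e_e is added, 1 + 1/denom while v_v exists
  and e_e is still to come.  Its product over all steps is edge_prob v e, which is
  roughly the probability of the single requirement.\<close>
definition edge_factor :: "real \<Rightarrow> nat \<times> nat \<Rightarrow> nat \<Rightarrow> real" where
  "edge_factor \<beta> p s = (if Suc s = fst p then 1 / denom \<beta> s
     else if snd p \<le> s \<and> Suc s < fst p then 1 + 1 / denom \<beta> s else 1)"

definition edge_prob :: "real \<Rightarrow> nat \<Rightarrow> nat \<Rightarrow> real" where
  "edge_prob \<beta> v e = (\<Prod>s\<in>{v..<e-1}. 1 + 1 / denom \<beta> s) / denom \<beta> (e-1)"

lemma prod_edge_factor: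
  assumes v: "1 \<le> v" "v < e" "e \<le> N"
  shows "(\<Prod>s\<in>{1..<N}. edge_factor \<beta> (e, v) s) = edge_prob \<beta> v e"
proof -
  have "(\<Prod>s\<in>{1..<N}. edge_factor \<beta> (e, v) s) = (\<Prod>s\<in>{v..<e}. edge_factor \<beta> (e, v) s)"
    by (rule prod.mono_neutral_right) (use v in \<open>auto simp: edge_factor_def\<close>)
  also have "{v..<e} = insert (e-1) {v..<e-1}" using v by auto
  also have "(\<Prod>s\<in>insert (e-1) {v..<e-1}. edge_factor \<beta> (e, v) s)
      = edge_factor \<beta> (e, v) (e-1) * (\<Prod>s\<in>{v..<e-1}. edge_factor \<beta> (e, v) s)"
    by (rule prod.insert) auto
  also have "edge_factor \<beta> (e, v) (e-1) = 1 / denom \<beta> (e-1)" using v by (simp add: edge_factor_def)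
  also have "(\<Prod>s\<in>{v..<e-1}. edge_factor \<beta> (e, v) s) = (\<Prod>s\<in>{v..<e-1}. 1 + 1 / denom \<beta> s)"
    by (rule prod.cong) (auto simp: edge_factor_def)
  finally show ?thesis unfolding edge_prob_def by simp
qed

lemma prod_edge_factors:
  assumes gE: "prescription E" and NE: "\<forall>p\<in>E. fst p \<le> N"
  shows "(\<Prod>s\<in>{1..<N}. \<Prod>p\<in>E. edge_factor \<beta> p s) = (\<Prod>p\<in>E. edge_prob \<beta> (snd p) (fst p))"
proof -
  have "(\<Prod>s\<in>{1..<N}. \<Prod>p\<in>E. edge_factor \<beta> p s) = (\<Prod>p\<in>E. \<Prod>s\<in>{1..<N}. edge_factor \<beta> p s)"
    by (rule prod.swap)
  also have "\<dots> = (\<Prod>p\<in>E. edge_prob \<beta> (snd p) (fst p))"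
  proof (rule prod.cong[OF refl])
    fix p assume p: "p \<in> E"
    obtain e v where ev: "p = (e, v)" by force
    have "1 \<le> v" "v < e" "e \<le> N" using p gE NE unfolding prescription_def ev by force+
    then show "(\<Prod>s\<in>{1..<N}. edge_factor \<beta> p s) = edge_prob \<beta> (snd p) (fst p)"
      unfolding ev using prod_edge_factor by simp
  qed
  finally show ?thesis .
qed

text \<open>At step s, the requirements split into the (at most one) decided one and the
  "active" ones, whose target exists but whose edge is still to come.\<close>
definition active :: "(nat \<times> nat) set \<Rightarrow> nat \<Rightarrow> nat" where
  "active E s = card {p\<in>E. snd p \<le> s \<and> Suc s < fst p}"

lemma card_decided_requirement:
  assumes "prescription E"
  shows "card {p\<in>E. Suc s = fst p} = (if decided_at E s then 1 else 0)"
proof (cases "decided_at E s")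
  case True
  then obtain p0 where p0: "p0 \<in> E" "fst p0 = Suc s" unfolding decided_at_def by auto
  then have "{p\<in>E. Suc s = fst p} = {p0}" using assms unfolding prescription_def by auto
  then show ?thesis using True by simp
next
  case False
  then have "{p\<in>E. Suc s = fst p} = {}" unfolding decided_at_def by force
  then show ?thesis using False by (simp only: card.empty) simp
qed

lemma prod_edge_factors_at:
  assumes gE: "prescription E"
  shows "(\<Prod>p\<in>E. edge_factor \<beta> p s)
       = (if decided_at E s then 1 / denom \<beta> s else 1) * (1 + 1 / denom \<beta> s) ^ active E s"
proof -
  have fE: "finite E" using gE unfolding prescription_def by auto
  define Fi where "Fi = {p\<in>E. Suc s = fst p}"
  define Ac where "Ac = {p\<in>E. snd p \<le> s \<and> Suc s < fst p}"
  have "(\<Prod>p\<in>E. edge_factor \<beta> p s) = (\<Prod>p\<in>Fi \<union> Ac. edge_factor \<beta> p s)"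
    by (rule prod.mono_neutral_right) (auto simp: fE Fi_def Ac_def edge_factor_def)
  also have "\<dots> = (\<Prod>p\<in>Fi. edge_factor \<beta> p s) * (\<Prod>p\<in>Ac. edge_factor \<beta> p s)"
    by (rule prod.union_disjoint) (use fE in \<open>auto simp: Fi_def Ac_def\<close>)
  also have "(\<Prod>p\<in>Fi. edge_factor \<beta> p s) = (1 / denom \<beta> s) ^ card Fi"
    by (subst prod.cong[where h="\<lambda>_. 1 / denom \<beta> s"]) (auto simp: Fi_def edge_factor_def)
  also have "(\<Prod>p\<in>Ac. edge_factor \<beta> p s) = (1 + 1 / denom \<beta> s) ^ card Ac"
    by (subst prod.cong[where h="\<lambda>_. 1 + 1 / denom \<beta> s"]) (auto simp: Ac_def edge_factor_def)
  finally show ?thesis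
    unfolding Fi_def card_decided_requirement[OF gE] Ac_def active_def by simp
qed

lemma sum_pending_at:
  assumes gE: "prescription E"
  shows "real (\<Sum>u\<in>{1..s}. pending E s u) = (if decided_at E s then 1 else 0) + real (active E s)"
proof -
  have fE: "finite E" using gE unfolding prescription_def by auto
  define S where "S = {p\<in>E. snd p \<le> s \<and> s < fst p}"
  have fS: "finite S" using fE unfolding S_def by auto
  have "(\<Sum>u\<in>{1..s}. pending E s u) = (\<Sum>u\<in>{1..s}. card {p\<in>S. snd p = u})"
    by (rule sum.cong) (auto simp: pending_def S_def intro!: arg_cong[where f=card])
  also have "\<dots> = (\<Sum>u\<in>{1..s}. \<Sum>p\<in>{p\<in>S. snd p = u}. 1)" by simp
  also have "\<dots> = card S"
    by (subst sum.group) (use fS gE in \<open>auto simp: S_def prescription_def\<close>)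
  also have "S = {p\<in>E. Suc s = fst p} \<union> {p\<in>E. snd p \<le> s \<and> Suc s < fst p}"
    unfolding S_def using gE unfolding prescription_def by (auto simp: Suc_lessI less_Suc_eq_le)
  also have "card \<dots> = card {p\<in>E. Suc s = fst p} + active E s"
    unfolding active_def by (rule card_Un_disjoint) (use fE in auto)
  finally show ?thesis unfolding card_decided_requirement[OF gE] by simp
qed

lemma step_factor_active:
  assumes "prescription E"
  shows "step_factor \<beta> E s = (if decided_at E s then 1 / denom \<beta> s
                              else 1 + real (active E s) / denom \<beta> s)"
  unfolding step_factor_def using sum_pending_at[OF assms] by simp

lemma step_factor_pos:
  assumes "\<beta> > 0" "prescription E" "s \<ge> 1"
  shows "step_factor \<beta> E s > 0"
  unfolding step_factor_active[OF assms(2)] using denom_pos[OF assms(1,3)]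
  by (auto intro: add_pos_nonneg)

text \<open>Interaction between requirements only increases the probability (Bernoulli) ...\<close>
lemma step_factor_le_edge_factors:
  assumes "\<beta> > 0" "prescription E" "s \<ge> 1"
  shows "step_factor \<beta> E s \<le> (\<Prod>p\<in>E. edge_factor \<beta> p s)"
proof -
  define D where "D = denom \<beta> s"
  have D: "D > 0" unfolding D_def using denom_pos[OF assms(1,3)] .
  show ?thesis
  proof (cases "decided_at E s")
    case True
    have "1 \<le> (1 + 1/D) ^ active E s" using D by simp
    then have "1/D \<le> (1 + 1/D) ^ active E s / D" using D by (simp add: divide_right_mono)
    then show ?thesis
      unfolding step_factor_active[OF assms(2)] prod_edge_factors_at[OF assms(2)] D_def[symmetric]
      using True by simp
  next
    case False
    have "1 + real (active E s) * (1/D) \<le> (1 + 1/D) ^ active E s"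
      by (rule Bernoulli_inequality) (use D in \<open>simp add: less_imp_le order_trans[of _ 0]\<close>)
    then show ?thesis
      unfolding step_factor_active[OF assms(2)] prod_edge_factors_at[OF assms(2)] D_def[symmetric]
      using False by simp
  qed
qed

definition step_error :: "real \<Rightarrow> nat \<Rightarrow> (nat \<times> nat) set \<Rightarrow> nat \<Rightarrow> nat \<Rightarrow> real" where
  "step_error \<beta> k E a s = (if a \<le> s then real k ^ 2 / (\<beta>^2 * real s ^ 2)
     + (if decided_at E s then real k / (\<beta> * real s) else 0) else 0)"

lemma edge_factors_le_step_factor:
  assumes b: "\<beta> > 0" and gE: "prescription E" and s: "s \<ge> 1"
    and cE: "card E \<le> k" and aE: "\<forall>p\<in>E. a \<le> snd p"
  shows "(\<Prod>p\<in>E. edge_factor \<beta> p s) \<le> step_factor \<beta> E s * exp (step_error \<beta> k E a s)"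
proof -
  define P where "P = active E s"
  define D where "D = denom \<beta> s"
  have D: "D > 0" "D \<ge> \<beta> * real s" unfolding D_def using denom_pos[OF b s] denom_ge[OF b s] by auto
  have fE: "finite E" using gE unfolding prescription_def by auto
  have Pk: "P \<le> k"
    unfolding P_def active_def using card_mono[OF fE, of "{p\<in>E. snd p \<le> s \<and> Suc s < fst p}"] cE by auto
  have x0: "1 / D \<ge> 0" using D by simp
  have err0: "step_error \<beta> k E a s \<ge> 0" unfolding step_error_def using b by auto
  have bnd: "real P / D \<le> real k / (\<beta> * real s)"
  proof -
    have "real P / D \<le> real k / D" using Pk D by (simp add: divide_right_mono)
    also have "\<dots> \<le> real k / (\<beta> * real s)" using D b s by (intro divide_left_mono) auto
    finally show ?thesis .
  qed
  have bnd2: "(real P / D)^2 \<le> real k ^ 2 / (\<beta>^2 * real s^2)"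
  proof -
    have "(real P / D)^2 \<le> (real k / (\<beta> * real s))^2" using bnd by (intro power_mono) (use D in auto)
    then show ?thesis by (simp add: power_divide power_mult_distrib)
  qed
  have fac: "(\<Prod>p\<in>E. edge_factor \<beta> p s) = (if decided_at E s then 1 / D else 1) * (1 + 1/D) ^ P"
    "step_factor \<beta> E s = (if decided_at E s then 1 / D else 1 + real P / D)"
    unfolding prod_edge_factors_at[OF gE] step_factor_active[OF gE] P_def D_def by simp_all
  show ?thesis
  proof (cases "P = 0")
    case True
    have "1 \<le> exp (step_error \<beta> k E a s)" using err0 by simp
    then show ?thesis unfolding fac using D True by (auto simp: divide_right_mono)
  next
    case False
    then obtain p where "p \<in> E" "snd p \<le> s"
      unfolding P_def active_def by (metis (no_types, lifting) card.empty empty_Collect_eq)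
    then have as: "a \<le> s" using aE by force
    have pe: "(1 + 1/D)^P \<le> exp (real P / D)" using one_plus_power_le_exp[OF x0, of P] by simp
    show ?thesis
    proof (cases "decided_at E s")
      case True
      have "real P / D \<le> step_error \<beta> k E a s" unfolding step_error_def using as True bnd b s
        by (auto intro: add_increasing)
      then have "(1 + 1/D)^P \<le> exp (step_error \<beta> k E a s)" using pe by (meson exp_le_cancel_iff order_trans)
      then show ?thesis unfolding fac using True D by (simp add: divide_right_mono)
    next
      case nd: False
      have e: "(real P / D)^2 \<le> step_error \<beta> k E a s" unfolding step_error_def using as nd bnd2 by auto
      have "(1 + 1/D)^P \<le> (1 + real P / D) * exp ((real P / D)^2)"
        using pe exp_le_one_plus_exp_sq[of "real P / D"] D by (meson divide_nonneg_pos of_nat_0_le_iff order_trans)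
      also have "\<dots> \<le> (1 + real P / D) * exp (step_error \<beta> k E a s)"
        using e D by (intro mult_left_mono) auto
      finally show ?thesis unfolding fac using nd by simp
    qed
  qed
qed

lemma card_decided_steps:
  assumes "finite E"
  shows "card {s\<in>S. decided_at E s} \<le> card E"
proof -
  have "{s\<in>S. decided_at E s} \<subseteq> (\<lambda>p. fst p - 1) ` E" unfolding decided_at_def by force
  then have "card {s\<in>S. decided_at E s} \<le> card ((\<lambda>p. fst p - 1) ` E)"
    by (rule card_mono[OF finite_imageI[OF assms]])
  also have "\<dots> \<le> card E" by (rule card_image_le[OF assms])
  finally show ?thesis .
qed

lemma sum_step_error:
  assumes b: "\<beta> > 0" and gE: "prescription E" and cE: "card E \<le> k" and a: "a \<ge> 1"
  shows "(\<Sum>s\<in>{1..<N}. step_error \<beta> k E a s) \<le> (2 * real k^2 / \<beta>^2 + real k^2 / \<beta>) / real a"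
proof -
  have fE: "finite E" using gE unfolding prescription_def by auto
  have s1: "(\<Sum>s\<in>{1..<N}. if a \<le> s then real k^2 / \<beta>^2 * (1 / real s^2) else 0)
      \<le> 2 * real k^2 / \<beta>^2 / real a"
  proof -
    have "(\<Sum>s\<in>{1..<N}. if a \<le> s then real k^2 / \<beta>^2 * (1 / real s^2) else 0)
        = (\<Sum>s\<in>{s\<in>{1..<N}. a \<le> s}. real k^2 / \<beta>^2 * (1 / real s^2))"
      by (rule sum.inter_filter[symmetric]) auto
    also have "{s\<in>{1..<N}. a \<le> s} = {a..<N}" using a by auto
    also have "(\<Sum>s\<in>{a..<N}. real k^2 / \<beta>^2 * (1 / real s^2)) = real k^2 / \<beta>^2 * (\<Sum>s\<in>{a..<N}. 1 / real s^2)"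
      by (simp add: sum_distrib_left)
    also have "\<dots> \<le> real k^2 / \<beta>^2 * (2 / real a)"
      using sum_inverse_squares[OF a] b by (intro mult_left_mono) auto
    finally show ?thesis by (simp add: mult.commute)
  qed
  have s2: "(\<Sum>s\<in>{1..<N}. if decided_at E s \<and> a \<le> s then real k / (\<beta> * real s) else 0)
      \<le> real k^2 / \<beta> / real a"
  proof -
    have "(\<Sum>s\<in>{1..<N}. if decided_at E s \<and> a \<le> s then real k / (\<beta> * real s) else 0)
        \<le> (\<Sum>s\<in>{1..<N}. if decided_at E s then real k / (\<beta> * real a) else 0)"
      using b a by (intro sum_mono) (auto simp: frac_le)
    also have "\<dots> = real (card {s\<in>{1..<N}. decided_at E s}) * (real k / (\<beta> * real a))"
      by (simp add: sum.inter_filter[symmetric])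
    also have "\<dots> \<le> real k * (real k / (\<beta> * real a))"
      using card_decided_steps[OF fE, of "{1..<N}"] cE b a by (intro mult_right_mono) auto
    finally show ?thesis by (simp add: power2_eq_square)
  qed
  have "(\<Sum>s\<in>{1..<N}. step_error \<beta> k E a s)
      = (\<Sum>s\<in>{1..<N}. if a \<le> s then real k^2 / \<beta>^2 * (1 / real s^2) else 0)
      + (\<Sum>s\<in>{1..<N}. if decided_at E s \<and> a \<le> s then real k / (\<beta> * real s) else 0)"
    unfolding sum.distrib[symmetric] by (rule sum.cong) (auto simp: step_error_def)
  also have "\<dots> \<le> 2 * real k^2 / \<beta>^2 / real a + real k^2 / \<beta> / real a" using s1 s2 by linarith
  finally show ?thesis by (simp add: add_divide_distrib)
qed

lemma step_factors_vs_edge_probs: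
  assumes b: "\<beta> > 0" and gE: "prescription E" and cE: "card E \<le> k" and a: "a \<ge> 1"
    and aE: "\<forall>p\<in>E. a \<le> snd p" and NE: "\<forall>p\<in>E. fst p \<le> N"
  shows "(\<Prod>s\<in>{1..<N}. step_factor \<beta> E s) \<le> (\<Prod>p\<in>E. edge_prob \<beta> (snd p) (fst p))"
    and "(\<Prod>p\<in>E. edge_prob \<beta> (snd p) (fst p))
         \<le> (\<Prod>s\<in>{1..<N}. step_factor \<beta> E s) * exp ((2 * real k^2 / \<beta>^2 + real k^2 / \<beta>) / real a)"
proof -
  note swap = prod_edge_factors[OF gE NE, of \<beta>, symmetric]
  have pos: "s \<in> {1..<N} \<Longrightarrow> step_factor \<beta> E s > 0" for s using step_factor_pos[OF b gE] by simp
  show "(\<Prod>s\<in>{1..<N}. step_factor \<beta> E s) \<le> (\<Prod>p\<in>E. edge_prob \<beta> (snd p) (fst p))"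
    unfolding swap using pos step_factor_le_edge_factors[OF b gE]
    by (intro prod_mono) (auto simp: less_imp_le)
  have "(\<Prod>s\<in>{1..<N}. \<Prod>p\<in>E. edge_factor \<beta> p s)
      \<le> (\<Prod>s\<in>{1..<N}. step_factor \<beta> E s * exp (step_error \<beta> k E a s))"
  proof (rule prod_mono)
    fix s assume "s \<in> {1..<N}"
    then show "0 \<le> (\<Prod>p\<in>E. edge_factor \<beta> p s) \<and>
        (\<Prod>p\<in>E. edge_factor \<beta> p s) \<le> step_factor \<beta> E s * exp (step_error \<beta> k E a s)"
      using pos step_factor_le_edge_factors[OF b gE] edge_factors_le_step_factor[OF b gE _ cE aE]
      by (meson atLeastLessThan_iff less_imp_le order_trans)
  qed
  also have "\<dots> = (\<Prod>s\<in>{1..<N}. step_factor \<beta> E s) * exp (\<Sum>s\<in>{1..<N}. step_error \<beta> k E a s)"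
    by (simp add: prod.distrib exp_sum)
  also have "\<dots> \<le> (\<Prod>s\<in>{1..<N}. step_factor \<beta> E s) * exp ((2 * real k^2 / \<beta>^2 + real k^2 / \<beta>) / real a)"
    using sum_step_error[OF b gE cE a, of N] pos by (intro mult_left_mono prod_nonneg) (auto simp: less_imp_le)
  finally show "(\<Prod>p\<in>E. edge_prob \<beta> (snd p) (fst p))
      \<le> (\<Prod>s\<in>{1..<N}. step_factor \<beta> E s) * exp ((2 * real k^2 / \<beta>^2 + real k^2 / \<beta>) / real a)"
    unfolding swap .
qed

section \<open>The single-edge probability and its power-law approximation\<close>

text \<open>The ideal edge probability (e/v)^(1/(2+beta)) / ((2+beta) e) of the continuum
  approximation; products of these give the main term.\<close>
definition ideal_prob :: "real \<Rightarrow> nat \<Rightarrow> nat \<Rightarrow> real" where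
  "ideal_prob \<beta> v e = (real e / real v) powr (1 / (2 + \<beta>)) / ((2 + \<beta>) * real e)"

lemma edge_prob_pos: "\<beta> > 0 \<Longrightarrow> 1 \<le> v \<Longrightarrow> v < e \<Longrightarrow> edge_prob \<beta> v e > 0"
  unfolding edge_prob_def using denom_pos[of \<beta>]
  by (intro divide_pos_pos prod_pos) (auto intro: add_pos_pos)

lemma ideal_prob_pos: "\<beta> > 0 \<Longrightarrow> 1 \<le> v \<Longrightarrow> 1 \<le> e \<Longrightarrow> ideal_prob \<beta> v e > 0"
  unfolding ideal_prob_def by (intro divide_pos_pos) auto

lemma ln_ideal_prob:
  "\<beta> > 0 \<Longrightarrow> 1 \<le> v \<Longrightarrow> 1 \<le> e \<Longrightarrow>
   ln (ideal_prob \<beta> v e) = (1 / (2 + \<beta>)) * (ln (real e) - ln (real v)) - ln (2 + \<beta>) - ln (real e)"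
  unfolding ideal_prob_def by (simp add: ln_div ln_mult)

lemma inverse_denom_close:
  assumes b: "\<beta> > 0" and s: "s \<ge> 1"
  shows "1 / denom \<beta> s - (1 / (2 + \<beta>)) / real s \<ge> 0"
    and "1 / denom \<beta> s - (1 / (2 + \<beta>)) / real s \<le> 1 / (\<beta> * real s ^ 2)"
proof -
  define D where "D = denom \<beta> s"
  have s1: "real s \<ge> 1" using s by simp
  have D: "D > 0" "D \<ge> \<beta> * real s" unfolding D_def using denom_pos[OF b s] denom_ge[OF b s] by auto
  have "D = (2 + \<beta>) * real s - 2" unfolding D_def denom_def by simp
  then have diff: "1 / D - (1 / (2 + \<beta>)) / real s = 2 / (2 + \<beta>) / (real s * D)"
    using D s1 b by (simp add: field_simps)
  show "1 / denom \<beta> s - (1 / (2 + \<beta>)) / real s \<ge> 0"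
    unfolding D_def[symmetric] diff using D s1 b by simp
  have "2 / (2 + \<beta>) \<le> 1" using b by (simp add: field_simps)
  moreover have "\<beta> * real s ^ 2 \<le> real s * D"
    using D s1 by (simp add: power2_eq_square algebra_simps mult_left_mono)
  ultimately have "2 / (2 + \<beta>) / (real s * D) \<le> 1 / (\<beta> * real s ^ 2)"
    using D s1 b by (intro frac_le) auto
  then show "1 / denom \<beta> s - (1 / (2 + \<beta>)) / real s \<le> 1 / (\<beta> * real s ^ 2)"
    unfolding D_def[symmetric] diff .
qed

definition log_step_const :: "real \<Rightarrow> real" where
  "log_step_const \<beta> = 1 / \<beta>^2 + 1 / \<beta> + 1"

lemma ln_step_vs_ideal:
  assumes b: "\<beta> > 0" and s: "s \<ge> 1"
  shows "\<bar>ln (1 + 1 / denom \<beta> s) - (1 / (2 + \<beta>)) * ln (1 + 1 / real s)\<bar> \<le> log_step_const \<beta> / real s ^ 2"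
proof -
  define D where "D = denom \<beta> s"
  define g where "g = 1 / (2 + \<beta>)"
  have s1: "real s \<ge> 1" using s by simp
  have D: "D > 0" "D \<ge> \<beta> * real s" unfolding D_def using denom_pos[OF b s] denom_ge[OF b s] by auto
  have g: "g > 0" "g \<le> 1" unfolding g_def using b by auto
  note close = inverse_denom_close[OF b s, folded D_def g_def]
  have "(1/D)^2 \<le> (1 / (\<beta> * real s))^2" using D b s1 by (intro power_mono frac_le) auto
  then have xsq: "(1 / D)^2 \<le> 1 / (\<beta>^2 * real s ^ 2)" by (simp add: power_mult_distrib power_divide)
  have u1: "ln (1 + 1/D) \<le> 1/D" by (rule ln_add_one_self_le_self) (use D in auto)
  have l1: "ln (1 + 1/D) \<ge> 1/D - (1/D)^2" by (rule ln_one_plus_ge) (use D in auto)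
  have u2: "ln (1 + 1 / real s) \<le> 1 / real s" by (rule ln_add_one_self_le_self) auto
  have gu2: "g * ln (1 + 1 / real s) \<le> g / real s" using mult_left_mono[OF u2, of g] g by simp
  have l2: "ln (1 + 1 / real s) \<ge> 1 / real s - (1 / real s)^2" by (rule ln_one_plus_ge) auto
  have gl2: "g * ln (1 + 1 / real s) \<ge> g / real s - g / real s ^ 2"
    using mult_left_mono[OF l2, of g] g by (simp add: algebra_simps power_divide)
  have gsq: "g / real s ^ 2 \<le> 1 / real s ^ 2" using g by (intro divide_right_mono) auto
  have up: "ln (1 + 1/D) - g * ln (1 + 1 / real s) \<le> 1 / (\<beta> * real s ^ 2) + 1 / real s ^ 2"
    using u1 gl2 close(2) gsq by linarith
  have lo: "ln (1 + 1/D) - g * ln (1 + 1 / real s) \<ge> - (1 / (\<beta>^2 * real s ^ 2))"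
    using l1 gu2 close(1) xsq by linarith
  have "1 / (\<beta> * real s ^ 2) + 1 / real s ^ 2 \<le> log_step_const \<beta> / real s ^ 2"
    unfolding log_step_const_def using b s1 by (simp add: field_simps)
  moreover have "1 / (\<beta>^2 * real s ^ 2) \<le> log_step_const \<beta> / real s ^ 2"
    unfolding log_step_const_def using b s1 by (simp add: field_simps)
  ultimately show ?thesis using up lo unfolding D_def g_def by (simp add: abs_le_iff)
qed

lemma sum_ln_steps_vs_ideal:
  assumes b: "\<beta> > 0" and v: "1 \<le> v" "v \<le> e"
  shows "\<bar>(\<Sum>s\<in>{v..<e}. ln (1 + 1 / denom \<beta> s)) - (1 / (2 + \<beta>)) * (ln (real e) - ln (real v))\<bar>
       \<le> 2 * log_step_const \<beta> / real v"
proof -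
  define g where "g = 1 / (2 + \<beta>)"
  have "(\<Sum>s\<in>{v..<e}. ln (1 + 1 / denom \<beta> s)) - g * (ln (real e) - ln (real v))
      = (\<Sum>s\<in>{v..<e}. ln (1 + 1 / denom \<beta> s) - g * ln (1 + 1 / real s))"
    unfolding sum_ln_telescope[OF v, symmetric] sum_subtractf sum_distrib_left ..
  also have "\<bar>\<dots>\<bar> \<le> (\<Sum>s\<in>{v..<e}. \<bar>ln (1 + 1 / denom \<beta> s) - g * ln (1 + 1 / real s)\<bar>)"
    by (rule sum_abs)
  also have "\<dots> \<le> (\<Sum>s\<in>{v..<e}. log_step_const \<beta> * (1 / real s ^ 2))"
    by (rule sum_mono) (use ln_step_vs_ideal[OF b] v in \<open>auto simp: g_def\<close>)
  also have "\<dots> = log_step_const \<beta> * (\<Sum>s\<in>{v..<e}. 1 / real s ^ 2)" by (simp add: sum_distrib_left)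
  also have "\<dots> \<le> log_step_const \<beta> * (2 / real v)"
    by (rule mult_left_mono) (use sum_inverse_squares[OF v(1)] b in \<open>auto simp: log_step_const_def\<close>)
  finally show ?thesis unfolding g_def by (simp add: mult.commute)
qed

lemma edge_prob_alt:
  assumes b: "\<beta> > 0" and v: "1 \<le> v" "v < e"
  shows "edge_prob \<beta> v e = (\<Prod>s\<in>{v..<e}. 1 + 1 / denom \<beta> s) / (denom \<beta> (e-1) + 1)"
proof -
  have D: "denom \<beta> (e-1) > 0" using denom_pos[OF b, of "e-1"] v by simp
  have "{v..<e} = insert (e-1) {v..<e-1}" using v by auto
  then have "(\<Prod>s\<in>{v..<e}. 1 + 1 / denom \<beta> s)
      = (1 + 1 / denom \<beta> (e-1)) * (\<Prod>s\<in>{v..<e-1}. 1 + 1 / denom \<beta> s)" by simp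
  also have "1 + 1 / denom \<beta> (e-1) = (denom \<beta> (e-1) + 1) / denom \<beta> (e-1)" using D by (simp add: field_simps)
  finally show ?thesis unfolding edge_prob_def using D by (simp add: field_simps)
qed

lemma ln_last_denom:
  assumes b: "\<beta> > 0" and v: "1 \<le> v" "v < e"
  shows "0 \<le> ln ((2 + \<beta>) * real e) - ln (denom \<beta> (e-1) + 1)"
    and "ln ((2 + \<beta>) * real e) - ln (denom \<beta> (e-1) + 1) \<le> 2 * (3 + \<beta>) / ((1 + \<beta>) * real v)"
proof -
  define r where "r = denom \<beta> (e-1) + 1"
  have v1: "real v \<ge> 1" "real e \<ge> 2" using v by auto
  have r: "r = (2 + \<beta>) * real e - (3 + \<beta>)"
    unfolding r_def denom_def using v by (simp add: of_nat_diff algebra_simps)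
  have be: "\<beta> * real e \<ge> 2 * \<beta>" using v1 b by simp
  have ex: "(1 + \<beta>) * real e / 2 = real e / 2 + \<beta> * real e / 2"
    "(2 + \<beta>) * real e = 2 * real e + \<beta> * real e" by (simp_all add: algebra_simps)
  have rlow: "r \<ge> (1 + \<beta>) * real e / 2" unfolding r ex using v1 b be by linarith
  have rpos: "r > 0" using rlow v1 b by (smt (verit) divide_pos_pos mult_pos_pos)
  have q: "(2 + \<beta>) * real e > 0" using b v1 by simp
  show "0 \<le> ln ((2 + \<beta>) * real e) - ln (denom \<beta> (e-1) + 1)"
    unfolding r_def[symmetric] using rpos q r b by (simp add: ln_le_cancel_iff)
  have "ln ((2 + \<beta>) * real e) - ln r = ln ((2 + \<beta>) * real e / r)" using ln_divide_pos[OF q rpos] by simp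
  also have "\<dots> \<le> (2 + \<beta>) * real e / r - 1" by (rule ln_le_minus_one) (use rpos q in simp)
  also have "\<dots> = (3 + \<beta>) / r" using rpos unfolding r by (simp add: field_simps)
  also have "\<dots> \<le> (3 + \<beta>) / ((1 + \<beta>) * real e / 2)" using rlow b v1 rpos by (intro divide_left_mono) auto
  also have "\<dots> \<le> 2 * (3 + \<beta>) / ((1 + \<beta>) * real v)" using b v1 v by (simp add: frac_le)
  finally show "ln ((2 + \<beta>) * real e) - ln (denom \<beta> (e-1) + 1) \<le> 2 * (3 + \<beta>) / ((1 + \<beta>) * real v)"
    unfolding r_def .
qed

definition edge_const :: "real \<Rightarrow> real" where
  "edge_const \<beta> = 2 * log_step_const \<beta> + 2 * (3 + \<beta>) / (1 + \<beta>)"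

lemma edge_const_nonneg: "\<beta> > 0 \<Longrightarrow> edge_const \<beta> \<ge> 0"
  unfolding edge_const_def log_step_const_def by (intro add_nonneg_nonneg) auto

lemma ln_edge_prob_vs_ideal:
  assumes b: "\<beta> > 0" and v: "1 \<le> v" "v < e"
  shows "\<bar>ln (edge_prob \<beta> v e) - ln (ideal_prob \<beta> v e)\<bar> \<le> edge_const \<beta> / real v"
proof -
  define S where "S = (\<Sum>s\<in>{v..<e}. ln (1 + 1 / denom \<beta> s))"
  have pos: "1 + 1 / denom \<beta> s > 0" if "s \<in> {v..<e}" for s
    using that v denom_pos[OF b, of s] by (simp add: add_pos_pos)
  have "denom \<beta> (e-1) > 0" using denom_pos[OF b, of "e-1"] v by simp
  then have Dp: "denom \<beta> (e-1) + 1 > 0" by simp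
  have lnP: "ln (\<Prod>s\<in>{v..<e}. 1 + 1 / denom \<beta> s) = S"
    unfolding S_def by (rule ln_prod) (use pos in force)+
  have "(\<Prod>s\<in>{v..<e}. 1 + 1 / denom \<beta> s) > 0" by (rule prod_pos) (use pos in auto)
  then have "ln (edge_prob \<beta> v e) = S - ln (denom \<beta> (e-1) + 1)"
    by (simp only: edge_prob_alt[OF b v] ln_divide_pos[OF _ Dp] lnP)
  moreover have "ln (ideal_prob \<beta> v e) = (1 / (2 + \<beta>)) * (ln (real e) - ln (real v)) - ln ((2 + \<beta>) * real e)"
    using ln_ideal_prob[OF b, of v e] v b by (simp add: ln_mult)
  ultimately have "\<bar>ln (edge_prob \<beta> v e) - ln (ideal_prob \<beta> v e)\<bar>
      \<le> 2 * log_step_const \<beta> / real v + 2 * (3 + \<beta>) / ((1 + \<beta>) * real v)"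
    using sum_ln_steps_vs_ideal[OF b v(1) less_imp_le[OF v(2)]] ln_last_denom[OF b v]
    unfolding S_def by linarith
  also have "\<dots> = edge_const \<beta> / real v" unfolding edge_const_def by (simp add: add_divide_distrib)
  finally show ?thesis .
qed

text \<open>It differs from
  init_factor only through v_1, whose initial weight is beta; this matters only for
  requirements targeting v_1, i.e. only when a = 1.\<close>
definition uniform_init_factor :: "real \<Rightarrow> (nat \<times> nat) set \<Rightarrow> nat \<Rightarrow> real" where
  "uniform_init_factor \<beta> E N = (\<Prod>u\<in>{1..N}. pochhammer (1 + \<beta>) (pending E u u))"

lemma uniform_init_factor_pos: "\<beta> > 0 \<Longrightarrow> uniform_init_factor \<beta> E N > 0"
  unfolding uniform_init_factor_def by (intro prod_pos pochhammer_pos) auto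

lemma init_factor_eq:
  assumes b: "\<beta> > 0" and N: "N \<ge> 1"
  shows "init_factor \<beta> E N = uniform_init_factor \<beta> E N * (\<beta> / (\<beta> + real (pending E 1 1)))"
proof -
  define k1 where "k1 = pending E 1 1"
  have "{1..N} = insert 1 {2..N}" using N by auto
  moreover have "(\<Prod>u\<in>{2..N}. pochhammer (init_weight \<beta> u) (pending E u u))
      = (\<Prod>u\<in>{2..N}. pochhammer (1 + \<beta>) (pending E u u))"
    by (rule prod.cong) (auto simp: init_weight_def)
  moreover have "pochhammer \<beta> k1 = pochhammer (1 + \<beta>) k1 * (\<beta> / (\<beta> + real k1))"
    using pochhammer_shift[of \<beta> k1] b by (simp add: field_simps add.commute)
  ultimately show ?thesis
    unfolding init_factor_def uniform_init_factor_def by (simp add: init_weight_def k1_def algebra_simps)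
qed

lemma init_factor_bounds:
  assumes b: "\<beta> > 0" and gE: "prescription E" and cE: "card E \<le> k" and N: "N \<ge> 1"
    and aE: "\<forall>p\<in>E. a \<le> snd p" and a: "a \<ge> 1"
  shows "init_factor \<beta> E N \<le> uniform_init_factor \<beta> E N"
    and "uniform_init_factor \<beta> E N * exp (- ln ((\<beta> + real k) / \<beta>) / real a) \<le> init_factor \<beta> E N"
proof -
  have fE: "finite E" using gE unfolding prescription_def by auto
  define k1 where "k1 = pending E 1 1"
  define r where "r = \<beta> / (\<beta> + real k1)"
  have r: "r \<le> 1" "r > 0" unfolding r_def using b by auto
  have eq: "init_factor \<beta> E N = uniform_init_factor \<beta> E N * r"
    unfolding r_def k1_def by (rule init_factor_eq[OF b N])
  note pos = uniform_init_factor_pos[OF b, of E N]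
  show "init_factor \<beta> E N \<le> uniform_init_factor \<beta> E N"
    unfolding eq using r pos by (auto simp: mult_le_cancel_left1)
  have L0: "0 \<le> ln ((\<beta> + real k) / \<beta>) / real a" by (intro divide_nonneg_nonneg ln_ge_zero) (use b in auto)
  have "exp (- ln ((\<beta> + real k) / \<beta>) / real a) \<le> r"
  proof (cases "k1 = 0")
    case True
    then show ?thesis using b a L0 unfolding r_def by simp
  next
    case False
    then obtain p where "p \<in> E" "snd p = 1" unfolding k1_def pending_def
      by (metis (mono_tags, lifting) card.empty empty_Collect_eq)
    then have a1: "a = 1" using aE a by force
    have "k1 \<le> card E" unfolding k1_def pending_def using fE by (intro card_mono) auto
    then have kk: "k1 \<le> k" using cE by simp
    have "exp (- ln ((\<beta> + real k) / \<beta>) / real a) = \<beta> / (\<beta> + real k)" using a1 b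
      by (simp add: exp_minus ln_div exp_diff)
    also have "\<dots> \<le> r" unfolding r_def using kk b by (intro divide_left_mono) auto
    finally show ?thesis .
  qed
  then show "uniform_init_factor \<beta> E N * exp (- ln ((\<beta> + real k) / \<beta>) / real a) \<le> init_factor \<beta> E N"
    unfolding eq using pos by (intro mult_left_mono) auto
qed

definition decoupling_const :: "real \<Rightarrow> nat \<Rightarrow> real" where
  "decoupling_const \<beta> k = ln ((\<beta> + real k) / \<beta>) + (2 * real k^2 / \<beta>^2 + real k^2 / \<beta>)"

lemma decoupling_const_nonneg: "\<beta> > 0 \<Longrightarrow> decoupling_const \<beta> k \<ge> 0"
  unfolding decoupling_const_def by (intro add_nonneg_nonneg ln_ge_zero) auto

lemma prescr_prob_vs_edge_probs:
  assumes b: "\<beta> > 0" and gE: "prescription E" and cE: "card E \<le> k" and N: "N \<ge> 1"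
    and a: "a \<ge> 1" and aE: "\<forall>p\<in>E. a \<le> snd p" and NE: "\<forall>p\<in>E. fst p \<le> N"
  defines "I \<equiv> uniform_init_factor \<beta> E N * (\<Prod>p\<in>E. edge_prob \<beta> (snd p) (fst p))"
  shows "prescr_prob \<beta> N E \<le> I"
    and "I * exp (- decoupling_const \<beta> k / real a) \<le> prescr_prob \<beta> N E"
proof -
  define L where "L = ln ((\<beta> + real k) / \<beta>) / real a"
  define Kg where "Kg = (2 * real k^2 / \<beta>^2 + real k^2 / \<beta>) / real a"
  define G where "G = (\<Prod>s\<in>{1..<N}. step_factor \<beta> E s)"
  define P where "P = (\<Prod>p\<in>E. edge_prob \<beta> (snd p) (fst p))"
  note ib = init_factor_bounds[OF b gE cE N aE a, folded L_def]
  note sp = step_factors_vs_edge_probs[OF b gE cE a aE NE, folded Kg_def G_def P_def]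
  have U: "uniform_init_factor \<beta> E N > 0" by (rule uniform_init_factor_pos[OF b])
  have G0: "G \<ge> 0" unfolding G_def using step_factor_pos[OF b gE] by (intro prod_nonneg) (auto simp: less_imp_le)
  have init0: "init_factor \<beta> E N \<ge> 0" using ib(2) U by (smt (verit) exp_gt_zero mult_pos_pos)
  have P0: "P \<ge> 0" using sp(1) G0 by linarith
  have "prescr_prob \<beta> N E = init_factor \<beta> E N * G" unfolding prescr_prob_def G_def ..
  also have "\<dots> \<le> uniform_init_factor \<beta> E N * P" using ib(1) sp(1) init0 G0 by (intro mult_mono) auto
  finally show "prescr_prob \<beta> N E \<le> I" unfolding I_def P_def .
  have "- decoupling_const \<beta> k / real a = (- L) + (- Kg)"
    unfolding decoupling_const_def L_def Kg_def by (simp add: add_divide_distrib diff_divide_distrib)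
  then have "exp (- decoupling_const \<beta> k / real a) = exp (- L) * exp (- Kg)"
    by (simp only: exp_add)
  then have "I * exp (- decoupling_const \<beta> k / real a) = I * (exp (- L) * exp (- Kg))"
    by (simp only:)
  also have "\<dots> = (uniform_init_factor \<beta> E N * exp (- L)) * (P * exp (- Kg))"
    unfolding I_def P_def by (simp only: mult_ac)
  also have "\<dots> \<le> init_factor \<beta> E N * G"
  proof (rule mult_mono)
    have "- ln ((\<beta> + real k) / \<beta>) / real a = - L" unfolding L_def by simp
    then show "uniform_init_factor \<beta> E N * exp (- L) \<le> init_factor \<beta> E N"
      using ib(2) by simp
    have "P * exp (- Kg) \<le> G * exp Kg * exp (- Kg)" using sp(2) by (intro mult_right_mono) auto
    then show "P * exp (- Kg) \<le> G" by (simp add: mult.assoc exp_minus_inverse)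
    show "0 \<le> init_factor \<beta> E N" by (rule init0)
    show "0 \<le> P * exp (- Kg)" using P0 by simp
  qed
  finally show "I * exp (- decoupling_const \<beta> k / real a) \<le> prescr_prob \<beta> N E"
    unfolding prescr_prob_def G_def .
qed

section \<open>Blocks of merged vertices\<close>

definition block :: "nat \<Rightarrow> nat \<Rightarrow> nat set" where
  "block m g = {(g-1)*m+1 .. g*m}"

lemma block_finite [simp]: "finite (block m g)"
  unfolding block_def by simp

lemma card_block: "g \<ge> 1 \<Longrightarrow> card (block m g) = m"
  unfolding block_def by (cases g) (auto simp: algebra_simps)

lemma merged_iff_block:
  assumes m: "m \<ge> 1" and i: "i \<ge> 1" and g: "g \<ge> 1"
  shows "merged m i = g \<longleftrightarrow> i \<in> block m g"
proof
  assume "merged m i = g"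
  then have q: "(i-1) div m = g - 1" unfolding merged_def using g by auto
  have "i - 1 = (i-1) div m * m + (i-1) mod m" by simp
  moreover have "(i-1) mod m < m" using m by simp
  ultimately show "i \<in> block m g" unfolding block_def q using i g
    by (cases g) (auto simp: algebra_simps)
next
  assume "i \<in> block m g"
  then have a: "(g-1)*m + 1 \<le> i" "i \<le> g*m" unfolding block_def by auto
  have "(i-1) div m = g - 1"
  proof (rule div_nat_eqI)
    show "m * (g - 1) \<le> i - 1" using a by (simp add: algebra_simps)
    show "i - 1 < m * Suc (g - 1)" using a g m by (cases g) (auto simp: algebra_simps)
  qed
  then show "merged m i = g" unfolding merged_def using g by simp
qed

lemma block_ge: "g \<ge> 1 \<Longrightarrow> m \<ge> 1 \<Longrightarrow> u \<in> block m g \<Longrightarrow> u \<ge> g"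
proof -
  assume "g \<ge> 1" "m \<ge> 1" "u \<in> block m g"
  then have "(g-1)*m+1 \<le> u" unfolding block_def by auto
  moreover have "g-1 \<le> (g-1)*m" using \<open>m \<ge> 1\<close> by simp
  ultimately show "u \<ge> g" using \<open>g \<ge> 1\<close> by linarith
qed

lemma block_lt: "g < g' \<Longrightarrow> u \<in> block m g \<Longrightarrow> u' \<in> block m g' \<Longrightarrow> u < u'"
proof -
  assume "g < g'" "u \<in> block m g" "u' \<in> block m g'"
  then have "u \<le> g*m" "(g'-1)*m + 1 \<le> u'" "g \<le> g' - 1" unfolding block_def by auto
  then have "g*m \<le> (g'-1)*m" by simp
  then show "u < u'" using \<open>u \<le> g*m\<close> \<open>(g'-1)*m + 1 \<le> u'\<close> by linarith
qed

lemma block_disj: "g \<noteq> g' \<Longrightarrow> block m g \<inter> block m g' = {}"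
  using block_lt by (metis disjoint_iff less_irrefl nat_neq_iff)

lemma block_subset: "2 \<le> g \<Longrightarrow> g \<le> n \<Longrightarrow> m \<ge> 1 \<Longrightarrow> block m g \<subseteq> {2..n*m}"
proof
  fix u assume "2 \<le> g" "g \<le> n" "m \<ge> 1" "u \<in> block m g"
  then have "(g-1)*m+1 \<le> u" "u \<le> g*m" "(g-1)*m \<ge> 1" "g*m \<le> n*m" unfolding block_def by auto
  then have "2 \<le> u" "u \<le> n*m" by linarith+
  then show "u \<in> {2..n*m}" by auto
qed

text \<open>Since heads are older than tails, an edge joining w_p and w_q with p < q
  goes from the block of q into the block of p.\<close>
lemma joins_iff:
  assumes m: "m \<ge> 1" and iv: "heads_below N hh" and x: "x \<in> {2..N}" and pq: "1 \<le> p" "p < q"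
  shows "joins m hh x p q \<longleftrightarrow> x \<in> block m q \<and> hh x \<in> block m p"
proof -
  have h: "1 \<le> hh x" "hh x < x" using iv x unfolding heads_below_def by auto
  have "merged m (hh x) \<le> merged m x" using h unfolding merged_def by (simp add: div_le_mono)
  then have "joins m hh x p q \<longleftrightarrow> merged m x = q \<and> merged m (hh x) = p"
    unfolding joins_def using pq by auto
  also have "\<dots> \<longleftrightarrow> x \<in> block m q \<and> hh x \<in> block m p"
    using merged_iff_block[OF m] h x pq by auto
  finally show ?thesis .
qed

lemma sum_product3:
  "sum (f :: nat \<Rightarrow> real) A * sum g B * sum h C = (\<Sum>i\<in>A. \<Sum>j\<in>B. \<Sum>l\<in>C. f i * g j * h l)"
proof -
  have "sum f A * sum g B * sum h C = (\<Sum>i\<in>A. \<Sum>j\<in>B. f i * g j) * sum h C"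
    by (simp only: sum_product)
  also have "\<dots> = (\<Sum>i\<in>A. \<Sum>j\<in>B. f i * g j * sum h C)" by (simp only: sum_distrib_right)
  also have "\<dots> = (\<Sum>i\<in>A. \<Sum>j\<in>B. \<Sum>l\<in>C. f i * g j * h l)" by (simp only: sum_distrib_left)
  finally show ?thesis .
qed

text \<open>A triangle on w_a, w_b, w_c (a < b < c) consists of an edge e_x from block b to
  block a, an edge e_y from block c to block b and an edge e_z != e_y from block c to
  block a.\<close>
lemma triangles_as_sum:
  assumes m: "m \<ge> 1" and iv: "heads_below (n*m) hh" and abc: "1 \<le> a" "a < b" "b < c" "c \<le> n"
  shows "real (triangles m n hh a b c) =
    (\<Sum>x\<in>block m b. \<Sum>y\<in>block m c. \<Sum>z\<in>block m c - {y}.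
     \<Sum>i\<in>block m a. \<Sum>j\<in>block m b. \<Sum>l\<in>block m a.
       of_bool (hh x = i) * of_bool (hh y = j) * of_bool (hh z = l))"
proof -
  define A where "A = block m a"
  define B where "B = block m b"
  define C where "C = block m c"
  have Bs: "B \<subseteq> {2..n*m}" unfolding B_def by (rule block_subset) (use abc m in auto)
  have Cs: "C \<subseteq> {2..n*m}" unfolding C_def by (rule block_subset) (use abc m in auto)
  let ?P = "\<lambda>(x,y,z). hh x \<in> A \<and> hh y \<in> B \<and> hh z \<in> A"
  have S: "{(x, y, z). x \<in> {2..n*m} \<and> y \<in> {2..n*m} \<and> z \<in> {2..n*m} \<and>
      joins m hh x a b \<and> joins m hh y b c \<and> joins m hh z a c} = {t\<in>B \<times> C \<times> C. ?P t}"
  proof -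
    have "joins m hh x a b \<longleftrightarrow> x \<in> B \<and> hh x \<in> A"
      and "joins m hh x b c \<longleftrightarrow> x \<in> C \<and> hh x \<in> B"
      and "joins m hh x a c \<longleftrightarrow> x \<in> C \<and> hh x \<in> A" if "x \<in> {2..n*m}" for x
      unfolding A_def B_def C_def using joins_iff[OF m iv that] abc by auto
    then show ?thesis using Bs Cs by auto
  qed
  have "real (triangles m n hh a b c) = (\<Sum>t\<in>B \<times> C \<times> C. if ?P t then 1 else 0)"
    unfolding triangles_def S by (simp add: sum.inter_filter[symmetric] B_def C_def)
  also have "\<dots> = (\<Sum>x\<in>B. \<Sum>y\<in>C. \<Sum>z\<in>C. of_bool (hh x \<in> A) * of_bool (hh y \<in> B) * of_bool (hh z \<in> A))"
    unfolding sum.cartesian_product by (rule sum.cong) auto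
  also have "\<dots> = (\<Sum>x\<in>B. \<Sum>y\<in>C. \<Sum>z\<in>C-{y}. of_bool (hh x \<in> A) * of_bool (hh y \<in> B) * of_bool (hh z \<in> A))"
  proof -
    have AB: "A \<inter> B = {}" unfolding A_def B_def by (rule block_disj) (use abc in auto)
    have inner: "(\<Sum>z\<in>C. of_bool (hh x \<in> A) * of_bool (hh y \<in> B) * of_bool (hh z \<in> A))
        = (\<Sum>z\<in>C-{y}. of_bool (hh x \<in> A) * of_bool (hh y \<in> B) * of_bool (hh z \<in> A) :: real)"
      if y: "y \<in> C" for x y
    proof -
      have "of_bool (hh y \<in> B) * of_bool (hh y \<in> A) = (0 :: real)" using AB by auto
      then show ?thesis by (subst sum.remove[OF _ y]) (auto simp: C_def)
    qed
    show ?thesis by (rule sum.cong[OF refl], rule sum.cong[OF refl], rule inner)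
  qed
  also have "\<dots> = (\<Sum>x\<in>B. \<Sum>y\<in>C. \<Sum>z\<in>C-{y}. \<Sum>i\<in>A. \<Sum>j\<in>B. \<Sum>l\<in>A.
       of_bool (hh x = i) * of_bool (hh y = j) * of_bool (hh z = l))"
  proof -
    have d: "of_bool (hh u \<in> X) = (\<Sum>i\<in>X. of_bool (hh u = i) :: real)" if "finite X" for u X
      using that by (simp add: sum.delta)
    have dA: "of_bool (hh u \<in> A) = (\<Sum>i\<in>A. of_bool (hh u = i) :: real)" for u
      using d[of A] by (simp add: A_def)
    have dB: "of_bool (hh u \<in> B) = (\<Sum>i\<in>B. of_bool (hh u = i) :: real)" for u
      using d[of B] by (simp add: B_def)
    show ?thesis unfolding dA dB sum_product3 ..
  qed
  finally show ?thesis unfolding A_def B_def C_def .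
qed

lemma ln_block:
  assumes m: "m \<ge> 1" and g: "g \<ge> 1" and u: "u \<in> block m g"
  shows "0 \<le> ln (real (g*m)) - ln (real u)" "ln (real (g*m)) - ln (real u) \<le> (real m - 1) / real g"
proof -
  have u1: "u \<ge> g" using block_ge[OF g m u] .
  have ub: "u \<le> g*m" "(g-1)*m + 1 \<le> u" using u unfolding block_def by auto
  have up: "real u > 0" using u1 g by simp
  have "real u \<le> real g * real m" using ub(1) by (metis of_nat_le_iff of_nat_mult)
  then have "ln (real u) \<le> ln (real (g*m))" using up g m by (subst ln_le_cancel_iff) auto
  then show "0 \<le> ln (real (g*m)) - ln (real u)" by simp
  have "ln (real (g*m)) - ln (real u) = ln (real (g*m) / real u)" using up ub g m by (simp add: ln_divide_pos)
  also have "\<dots> \<le> real (g*m) / real u - 1" by (rule ln_le_minus_one) (use up g m in simp)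
  also have "\<dots> = (real (g*m) - real u) / real u" using up by (simp add: field_simps)
  also have "\<dots> \<le> (real m - 1) / real u"
  proof (rule divide_right_mono)
    have "real ((g-1)*m + 1) \<le> real u" using ub by linarith
    moreover have "real ((g-1)*m + 1) = real (g*m) - real m + 1" using g by (simp add: of_nat_diff algebra_simps)
    ultimately show "real (g*m) - real u \<le> real m - 1" by linarith
  qed (use up in auto)
  also have "\<dots> \<le> (real m - 1) / real g" using u1 g m by (intro divide_left_mono) auto
  finally show "ln (real (g*m)) - ln (real u) \<le> (real m - 1) / real g" .
qed

lemma ideal_prob_block:
  assumes b: "\<beta> > 0" and m: "m \<ge> 1" and a: "a \<ge> 1" and g: "a \<le> g1" "a \<le> g2"
    and v: "v \<in> block m g1" and e: "e \<in> block m g2"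
  shows "\<bar>ln (ideal_prob \<beta> v e) - ln (ideal_prob \<beta> (g1*m) (g2*m))\<bar> \<le> (real m - 1) / real a"
proof -
  define \<gamma> where "\<gamma> = 1 / (2 + \<beta>)"
  have g1: "g1 \<ge> 1" "g2 \<ge> 1" using g a by auto
  have v1: "v \<ge> 1" "e \<ge> 1" using block_ge[OF g1(1) m v] block_ge[OF g1(2) m e] g1 by auto
  have gm: "g1 * m \<ge> 1" "g2 * m \<ge> 1" using g1 m by auto
  have ga: "0 < \<gamma>" "\<gamma> \<le> 1" unfolding \<gamma>_def using b by auto
  note dv = ln_block[OF m g1(1) v] and de = ln_block[OF m g1(2) e]
  define \<delta>v where "\<delta>v = ln (real (g1*m)) - ln (real v)"
  define \<delta>e where "\<delta>e = ln (real (g2*m)) - ln (real e)"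
  have eq: "ln (ideal_prob \<beta> v e) - ln (ideal_prob \<beta> (g1*m) (g2*m)) = (1 - \<gamma>) * \<delta>e + \<gamma> * \<delta>v"
    unfolding ln_ideal_prob[OF b v1] ln_ideal_prob[OF b gm] \<delta>v_def \<delta>e_def \<gamma>_def[symmetric]
    by (simp add: algebra_simps)
  have m0: "real m - 1 \<ge> 0" using m by simp
  have "\<delta>e \<le> (real m - 1) / real a"
    using de(2) divide_left_mono[OF _ m0, of "real a" "real g2"] a g unfolding \<delta>e_def by auto
  then have "(1 - \<gamma>) * \<delta>e \<le> (1 - \<gamma>) * ((real m - 1) / real a)" using ga by (intro mult_left_mono) auto
  moreover have "\<delta>v \<le> (real m - 1) / real a"
    using dv(2) divide_left_mono[OF _ m0, of "real a" "real g1"] a g unfolding \<delta>v_def by auto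
  then have "\<gamma> * \<delta>v \<le> \<gamma> * ((real m - 1) / real a)" using ga by (intro mult_left_mono) auto
  moreover have "(1 - \<gamma>) * ((real m - 1) / real a) + \<gamma> * ((real m - 1) / real a) = (real m - 1) / real a"
    by (simp only: distrib_right[symmetric]) simp
  moreover have "(1 - \<gamma>) * \<delta>e \<ge> 0" "\<gamma> * \<delta>v \<ge> 0" using dv(1) de(1) ga unfolding \<delta>v_def \<delta>e_def by auto
  ultimately show ?thesis unfolding eq by linarith
qed

lemma ln_edge_prob_block:
  assumes b: "\<beta> > 0" and m: "m \<ge> 1" and a: "a \<ge> 1" and g: "a \<le> g1" "a \<le> g2"
    and v: "v \<in> block m g1" and e: "e \<in> block m g2" and ve: "v < e"
  shows "\<bar>ln (edge_prob \<beta> v e) - ln (ideal_prob \<beta> (g1*m) (g2*m))\<bar> \<le> (edge_const \<beta> + real m - 1) / real a"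
proof -
  have va: "v \<ge> a" using block_ge[OF _ m v] g a by simp
  have "edge_const \<beta> / real v \<le> edge_const \<beta> / real a"
    using edge_const_nonneg[OF b] va a by (intro divide_left_mono) auto
  then have "\<bar>ln (edge_prob \<beta> v e) - ln (ideal_prob \<beta> v e)\<bar> \<le> edge_const \<beta> / real a"
    using ln_edge_prob_vs_ideal[OF b _ ve] va a by fastforce
  moreover have "\<bar>ln (ideal_prob \<beta> v e) - ln (ideal_prob \<beta> (g1*m) (g2*m))\<bar> \<le> (real m - 1) / real a"
    by (rule ideal_prob_block[OF b m a g v e])
  moreover have "(edge_const \<beta> + real m - 1) / real a = edge_const \<beta> / real a + (real m - 1) / real a"
    by (simp add: add_divide_distrib diff_divide_distrib)
  ultimately show ?thesis by linarith
qed

section \<open>Triangles\<close>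

text \<open>The power-law identity behind the main term: the product of the three ideal edge
  probabilities between w_a, w_b, w_c, with the (2+beta)^3 normalisation removed.\<close>
lemma triangle_power_identity:
  fixes a b c \<beta> :: real
  assumes pos: "a > 0" "b > 0" "c > 0" and \<beta>: "\<beta> > 0"
  defines "g \<equiv> 1 / (2 + \<beta>)"
  shows "(b / a) powr g * (c / b) powr g * (c / a) powr g / (b * c * c)
       = (1 / (a ^ 2 * b powr (2 + \<beta>) * c powr (2 + 2 * \<beta>))) powr g"
proof -
  define X where "X = a ^ 2 * b powr (2 + \<beta>) * c powr (2 + 2 * \<beta>)"
  have Xp: "X > 0" unfolding X_def using pos by simp
  have g1: "g * (2 + \<beta>) = 1" "g * (2 + 2 * \<beta>) = 2 - 2 * g" unfolding g_def using \<beta> by (simp_all add: field_simps)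
  have "ln ((1 / X) powr g) = - g * ln X" using Xp by (simp add: ln_div)
  also have "\<dots> = -(2*g*ln a) - (g*(2 + \<beta>))*ln b - (g*(2 + 2*\<beta>))*ln c"
    unfolding X_def using pos by (simp add: ln_mult ln_realpow algebra_simps)
  also have "\<dots> = g * (ln b - ln a) + g * (ln c - ln b) + g * (ln c - ln a) - (ln b + ln c + ln c)"
    unfolding g1 by (simp add: algebra_simps)
  also have "\<dots> = ln ((b / a) powr g * (c / b) powr g * (c / a) powr g / (b * c * c))"
    using pos by (simp add: ln_mult ln_div)
  finally show ?thesis
    using pos Xp unfolding X_def by (subst ln_inj_iff[symmetric]) auto
qed

lemma main_coefficient_identity:
  fixes r \<beta> :: real
  assumes "2 + \<beta> \<noteq> 0"
  shows "r*(r-1)*(1+\<beta>)^2/(2+\<beta>)^2 + r*(r-1)^2*(1+\<beta>)^3/(2+\<beta>)^3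
       = r*(r-1)*(r*(1+\<beta>)^3+(1+\<beta>)^2)/(2+\<beta>)^3"
proof -
  have "r*(r-1)*(1+\<beta>)^2/(2+\<beta>)^2 = r*(r-1)*(1+\<beta>)^2*(2+\<beta>)/(2+\<beta>)^3"
    using assms by (simp add: power2_eq_square power3_eq_cube)
  moreover have "r*(r-1)*(1+\<beta>)^2*(2+\<beta>) + r*(r-1)^2*(1+\<beta>)^3 = r*(r-1)*(r*(1+\<beta>)^3+(1+\<beta>)^2)"
    by algebra
  ultimately show ?thesis by (simp add: add_divide_distrib[symmetric])
qed

definition tri_prescr :: "nat \<Rightarrow> nat \<Rightarrow> nat \<Rightarrow> nat \<Rightarrow> nat \<Rightarrow> nat \<Rightarrow> (nat \<times> nat) set" where
  "tri_prescr x i y j z l = {(x, i), (y, j), (z, l)}"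

text \<open>Total error constant: decoupling three edges, and moving three edges to the last
  vertices of their blocks.\<close>
definition error_const :: "real \<Rightarrow> nat \<Rightarrow> real" where
  "error_const \<beta> m = decoupling_const \<beta> 3 + 3 * (edge_const \<beta> + real m - 1)"

lemma error_const_nonneg: "\<beta> > 0 \<Longrightarrow> m \<ge> 1 \<Longrightarrow> error_const \<beta> m \<ge> 0"
  unfolding error_const_def using decoupling_const_nonneg[of \<beta> 3] edge_const_nonneg[of \<beta>] by simp

locale vertex_triple =
  fixes m n a b c :: nat
  assumes m1: "m \<ge> 1" and a1: "1 \<le> a" and ab: "a < b" and bc: "b < c" and cn: "c \<le> n"
begin

definition "A = block m a"
definition "B = block m b"
definition "C = block m c"

lemma card_blocks: "card A = m" "card B = m" "card C = m"
  unfolding A_def B_def C_def using card_block a1 ab bc by auto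

abbreviation triangle_index :: "nat \<Rightarrow> nat \<Rightarrow> nat \<Rightarrow> nat \<Rightarrow> nat \<Rightarrow> nat \<Rightarrow> bool" where
  "triangle_index x y z i j l \<equiv> x \<in> B \<and> y \<in> C \<and> z \<in> C \<and> z \<noteq> y \<and> i \<in> A \<and> j \<in> B \<and> l \<in> A"

lemma index_facts:
  assumes "triangle_index x y z i j l"
  shows "i < x" "j < y" "l < z" "x < y" "x < z" "a \<le> i" "a \<le> j" "a \<le> l"
    "x \<le> n*m" "y \<le> n*m" "z \<le> n*m" "i \<noteq> j" "j \<noteq> l"
proof -
  show "i < x" "j < y" "x < y" "x < z" using block_lt ab bc assms unfolding A_def B_def C_def by blast+
  show "l < z" using block_lt[of a c] ab bc assms unfolding A_def C_def by auto
  show "a \<le> i" "a \<le> l" using block_ge[OF a1 m1] assms unfolding A_def by auto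
  show "a \<le> j" using block_ge[of b m j] m1 ab assms unfolding B_def by auto
  have "C \<subseteq> {2..n*m}" "B \<subseteq> {2..n*m}" unfolding C_def B_def
    by (rule block_subset; use m1 ab bc cn a1 in auto)+
  then show "x \<le> n*m" "y \<le> n*m" "z \<le> n*m" using assms by auto
  show "i \<noteq> j" "j \<noteq> l" using block_disj[of a b m] ab assms unfolding A_def B_def by auto
qed

lemma tri_prescr_facts:
  assumes "triangle_index x y z i j l"
  shows "prescription (tri_prescr x i y j z l)" "card (tri_prescr x i y j z l) \<le> 3"
    "\<forall>p\<in>tri_prescr x i y j z l. a \<le> snd p" "\<forall>p\<in>tri_prescr x i y j z l. fst p \<le> n*m"
  using index_facts[OF assms] assms a1
  unfolding prescription_def tri_prescr_def by (auto simp: card_insert_if)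

lemma prod_tri_prescr:
  assumes "triangle_index x y z i j l"
  shows "(\<Prod>p\<in>tri_prescr x i y j z l. h (fst p) (snd p)) = h x i * h y j * (h z l :: 'b :: comm_monoid_mult)"
proof -
  have "(x, i) \<notin> {(y, j), (z, l)}" "(y, j) \<notin> {(z, l)}" using index_facts[OF assms] assms by auto
  then show ?thesis unfolding tri_prescr_def by (simp add: mult.assoc)
qed

lemma expected_triangles_sum:
  assumes b: "\<beta> > 0"
  shows "expected_triangles \<beta> m n a b c =
    (\<Sum>x\<in>B. \<Sum>y\<in>C. \<Sum>z\<in>C - {y}. \<Sum>i\<in>A. \<Sum>j\<in>B. \<Sum>l\<in>A. prescr_prob \<beta> (n*m) (tri_prescr x i y j z l))"
proof -
  let ?M = "tree_proc \<beta> (n*m)"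
  let ?ind = "\<lambda>x y z i j l hh. of_bool (hh x = i) * of_bool (hh y = j) * (of_bool (hh z = l) :: real)"
  have fin: "finite (set_pmf ?M)" by (rule finite_tree[OF b])
  have "expected_triangles \<beta> m n a b c = measure_pmf.expectation ?M
     (\<lambda>hh. \<Sum>x\<in>B. \<Sum>y\<in>C. \<Sum>z\<in>C - {y}. \<Sum>i\<in>A. \<Sum>j\<in>B. \<Sum>l\<in>A. ?ind x y z i j l hh)"
    unfolding expected_triangles_def
    using triangles_as_sum[OF m1 heads_below_tree[OF b] a1 ab bc cn]
    by (intro integral_cong_AE) (auto simp: AE_measure_pmf_iff A_def B_def C_def)
  also have "\<dots> = (\<Sum>x\<in>B. \<Sum>y\<in>C. \<Sum>z\<in>C - {y}. \<Sum>i\<in>A. \<Sum>j\<in>B. \<Sum>l\<in>A.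
        measure_pmf.expectation ?M (?ind x y z i j l))"
    by (simp add: integrable_measure_pmf_finite[OF fin] A_def B_def C_def
        del: sum_mult_of_bool_eq sum_of_bool_eq)
  also have "\<dots> = (\<Sum>x\<in>B. \<Sum>y\<in>C. \<Sum>z\<in>C - {y}. \<Sum>i\<in>A. \<Sum>j\<in>B. \<Sum>l\<in>A.
        prescr_prob \<beta> (n*m) (tri_prescr x i y j z l))"
  proof (intro sum.cong refl)
    fix x y z i j l assume "x \<in> B" "y \<in> C" "z \<in> C - {y}" "i \<in> A" "j \<in> B" "l \<in> A"
    then have idx: "triangle_index x y z i j l" by auto
    note f = tri_prescr_facts[OF idx]
    have "n * m \<ge> 1" using index_facts[OF idx] by linarith
    moreover have "(\<Prod>p\<in>tri_prescr x i y j z l. of_bool (hh (fst p) = snd p)) = ?ind x y z i j l hh" for hh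
      using prod_tri_prescr[OF idx, of "\<lambda>e v. of_bool (hh e = v)"] by simp
    ultimately show "measure_pmf.expectation ?M (?ind x y z i j l) = prescr_prob \<beta> (n*m) (tri_prescr x i y j z l)"
      using prescription_probability[OF b f(1) _ f(4)] by simp
  qed
  finally show ?thesis .
qed

text \<open>The uniform initial factor of a triangle prescription: (1+beta)^3, or
  (1+beta)^2 (2+beta) when both edges into block a share their head (i = l).\<close>
lemma uniform_init_factor_tri:
  assumes "\<beta> > 0" and idx: "triangle_index x y z i j l"
  shows "uniform_init_factor \<beta> (tri_prescr x i y j z l) (n*m) = (1 + \<beta>)^3 + of_bool (i = l) * (1 + \<beta>)^2"
proof -
  note f = index_facts[OF idx]
  let ?E = "tri_prescr x i y j z l"
  define h where "h u = pochhammer (1 + \<beta>) (card {p\<in>?E. snd p = u})" for u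
  have pend: "pending ?E u u = card {p\<in>?E. snd p = u}" for u
    unfolding pending_def by (rule arg_cong[where f=card]) (use f in \<open>auto simp: tri_prescr_def\<close>)
  have "uniform_init_factor \<beta> ?E (n*m) = (\<Prod>u\<in>{1..n*m}. h u)"
    unfolding uniform_init_factor_def h_def pend ..
  also have "\<dots> = (\<Prod>u\<in>{i,j,l}. h u)"
  proof (rule prod.mono_neutral_right)
    show "{i,j,l} \<subseteq> {1..n*m}" using f a1 by auto
    show "\<forall>u\<in>{1..n*m} - {i,j,l}. h u = 1"
    proof
      fix u assume "u \<in> {1..n*m} - {i,j,l}"
      then have "{p\<in>?E. snd p = u} = {}" unfolding tri_prescr_def by auto
      then show "h u = 1" unfolding h_def by (simp only: card.empty pochhammer_0)
    qed
  qed auto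
  also have "\<dots> = (1 + \<beta>)^3 + of_bool (i = l) * (1 + \<beta>)^2"
  proof (cases "i = l")
    case True
    have "{p\<in>?E. snd p = i} = {(x,i),(z,i)}" "{p\<in>?E. snd p = j} = {(y,j)}"
      using True f unfolding tri_prescr_def by auto
    moreover have "card {(x,i),(z,i)} = 2" using f by auto
    moreover have "{i,j,l} = {i,j}" using True by auto
    ultimately have "(\<Prod>u\<in>{i,j,l}. h u) = (1 + \<beta>) * (2 + \<beta>) * (1 + \<beta>)"
      unfolding h_def using f by (simp add: numeral_2_eq_2 pochhammer_Suc algebra_simps)
    then show ?thesis using True by (simp add: power2_eq_square power3_eq_cube algebra_simps)
  next
    case False
    have "{p\<in>?E. snd p = i} = {(x,i)}" "{p\<in>?E. snd p = j} = {(y,j)}" "{p\<in>?E. snd p = l} = {(z,l)}"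
      using False f unfolding tri_prescr_def by auto
    then show ?thesis unfolding h_def using f False by (simp add: power3_eq_cube)
  qed
  finally show ?thesis .
qed

definition ideal_triangle :: "real \<Rightarrow> real" where
  "ideal_triangle \<beta> = ideal_prob \<beta> (a*m) (b*m) * ideal_prob \<beta> (b*m) (c*m) * ideal_prob \<beta> (a*m) (c*m)"

lemma ideal_triangle_pos: "\<beta> > 0 \<Longrightarrow> ideal_triangle \<beta> > 0"
  unfolding ideal_triangle_def using m1 a1 ab bc by (intro mult_pos_pos ideal_prob_pos) auto

lemma ideal_triangle_eq:
  assumes b: "\<beta> > 0"
  shows "ideal_triangle \<beta> * ((2 + \<beta>)^3 * real m^3)
       = (1 / (real a ^ 2 * real b powr (2 + \<beta>) * real c powr (2 + 2 * \<beta>))) powr (1 / (2 + \<beta>))"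
proof -
  define g where "g = 1 / (2 + \<beta>)"
  have pa: "real a > 0" "real b > 0" "real c > 0" "real m > 0" using a1 ab bc m1 by auto
  have t: "ideal_prob \<beta> (u * m) (v * m) = (real v / real u) powr g / ((2 + \<beta>) * real v * real m)"
    if "u \<ge> 1" for u v
    unfolding ideal_prob_def g_def using pa that by (simp add: algebra_simps)
  have hl: "(x / (k * bb * mm)) * (y / (k * cc * mm)) * (z / (k * cc * mm)) * (k^3 * mm^3) = x * y * z / (bb * cc * cc)"
    if "k \<noteq> 0" "mm \<noteq> 0" "bb \<noteq> 0" "cc \<noteq> 0" for x y z k bb cc mm :: real
    using that by (simp add: field_simps power3_eq_cube)
  have "(2 + \<beta>) \<noteq> 0" "b \<ge> 1" using b ab a1 by auto
  then have "ideal_triangle \<beta> * ((2 + \<beta>)^3 * real m^3)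
      = (real b / real a) powr g * (real c / real b) powr g * (real c / real a) powr g / (real b * real c * real c)"
    unfolding ideal_triangle_def t[OF a1] t[OF \<open>b \<ge> 1\<close>] using hl pa by simp
  then show ?thesis unfolding g_def triangle_power_identity[OF pa(1-3) b] .
qed

lemma edge_probs_vs_ideal_triangle:
  assumes b: "\<beta> > 0" and idx: "triangle_index x y z i j l"
  defines "P \<equiv> edge_prob \<beta> i x * edge_prob \<beta> j y * edge_prob \<beta> l z"
    and "\<delta> \<equiv> 3 * ((edge_const \<beta> + real m - 1) / real a)"
  shows "P \<le> ideal_triangle \<beta> * exp \<delta>" and "ideal_triangle \<beta> * exp (- \<delta>) \<le> P"
proof -
  note f = index_facts[OF idx]
  define T where "T = ideal_triangle \<beta>"
  define d where "d = (edge_const \<beta> + real m - 1) / real a"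
  have a_le: "a \<le> b" "a \<le> c" "b \<le> c" using ab bc by auto
  have Pp: "edge_prob \<beta> i x > 0" "edge_prob \<beta> j y > 0" "edge_prob \<beta> l z > 0"
    using f a1 by (auto intro!: edge_prob_pos[OF b])
  have tp: "ideal_prob \<beta> (a*m) (b*m) > 0" "ideal_prob \<beta> (b*m) (c*m) > 0" "ideal_prob \<beta> (a*m) (c*m) > 0"
    using m1 a1 ab bc by (auto intro!: ideal_prob_pos[OF b])
  have lnP: "ln P = ln (edge_prob \<beta> i x) + ln (edge_prob \<beta> j y) + ln (edge_prob \<beta> l z)"
    unfolding P_def using Pp by (simp add: ln_mult)
  have lnT: "ln T = ln (ideal_prob \<beta> (a*m) (b*m)) + ln (ideal_prob \<beta> (b*m) (c*m)) + ln (ideal_prob \<beta> (a*m) (c*m))"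
    unfolding T_def ideal_triangle_def using tp by (simp add: ln_mult)
  have mem: "i \<in> block m a" "x \<in> block m b" "j \<in> block m b" "y \<in> block m c"
    "l \<in> block m a" "z \<in> block m c" using idx unfolding A_def B_def C_def by auto
  define r1 where "r1 = ln (edge_prob \<beta> i x) - ln (ideal_prob \<beta> (a*m) (b*m))"
  define r2 where "r2 = ln (edge_prob \<beta> j y) - ln (ideal_prob \<beta> (b*m) (c*m))"
  define r3 where "r3 = ln (edge_prob \<beta> l z) - ln (ideal_prob \<beta> (a*m) (c*m))"
  have "\<bar>r1\<bar> \<le> d" "\<bar>r2\<bar> \<le> d" "\<bar>r3\<bar> \<le> d"
    unfolding r1_def r2_def r3_def d_def
    using ln_edge_prob_block[OF b m1 a1 order_refl a_le(1) mem(1,2) f(1)]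
      ln_edge_prob_block[OF b m1 a1 a_le(1,2) mem(3,4) f(2)]
      ln_edge_prob_block[OF b m1 a1 order_refl a_le(2) mem(5,6) f(3)] by simp_all
  moreover have "ln P - ln T = r1 + r2 + r3" unfolding lnP lnT r1_def r2_def r3_def by linarith
  moreover have "\<bar>r1 + r2 + r3\<bar> \<le> \<bar>r1\<bar> + \<bar>r2\<bar> + \<bar>r3\<bar>"
    by (rule order_trans[OF abs_triangle_ineq add_right_mono[OF abs_triangle_ineq]])
  ultimately have "\<bar>ln P - ln T\<bar> \<le> \<delta>" unfolding \<delta>_def d_def by linarith
  moreover have "P > 0" "T > 0" unfolding P_def T_def using Pp ideal_triangle_pos[OF b] by simp_all
  ultimately show "P \<le> ideal_triangle \<beta> * exp \<delta>" "ideal_triangle \<beta> * exp (- \<delta>) \<le> P"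
    using ln_close_imp_exp_bounds unfolding T_def by blast+
qed

lemma prescr_prob_tri_bounds:
  assumes b: "\<beta> > 0" and idx: "triangle_index x y z i j l"
  defines "W \<equiv> (1 + \<beta>)^3 + of_bool (i = l) * (1 + \<beta>)^2"
  shows "W * ideal_triangle \<beta> * exp (- error_const \<beta> m / real a) \<le> prescr_prob \<beta> (n*m) (tri_prescr x i y j z l)"
    and "prescr_prob \<beta> (n*m) (tri_prescr x i y j z l) \<le> W * ideal_triangle \<beta> * exp (error_const \<beta> m / real a)"
proof -
  note tf = tri_prescr_facts[OF idx]
  define T where "T = ideal_triangle \<beta>"
  define \<delta> where "\<delta> = 3 * ((edge_const \<beta> + real m - 1) / real a)"
  define Dc where "Dc = decoupling_const \<beta> 3 / real a"
  define P where "P = edge_prob \<beta> i x * edge_prob \<beta> j y * edge_prob \<beta> l z"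
  note TP = edge_probs_vs_ideal_triangle[OF b idx, folded T_def \<delta>_def P_def]
  have N1: "n * m \<ge> 1" using index_facts[OF idx] by linarith
  have Tp: "T > 0" unfolding T_def by (rule ideal_triangle_pos[OF b])
  have W0: "W \<ge> 0" unfolding W_def using b by simp
  have K: "error_const \<beta> m / real a = Dc + \<delta>"
    unfolding error_const_def Dc_def \<delta>_def by (simp add: add_divide_distrib)
  have Dc0: "Dc \<ge> 0" unfolding Dc_def using decoupling_const_nonneg[OF b] by simp
  note pb = prescr_prob_vs_edge_probs[OF b tf(1,2) N1 a1 tf(3,4),
      unfolded uniform_init_factor_tri[OF b idx] prod_tri_prescr[OF idx, of "\<lambda>e v. edge_prob \<beta> v e"],
      folded W_def P_def]
  have "prescr_prob \<beta> (n*m) (tri_prescr x i y j z l) \<le> W * (T * exp \<delta>)"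
    by (rule order_trans[OF pb(1) mult_left_mono[OF TP(1) W0]])
  also have "\<dots> \<le> W * T * exp (error_const \<beta> m / real a)"
  proof -
    have "exp \<delta> \<le> exp (Dc + \<delta>)" using Dc0 by simp
    then show ?thesis
      unfolding K mult.assoc by (rule mult_left_mono[OF mult_left_mono[OF _ less_imp_le[OF Tp]] W0])
  qed
  finally show "prescr_prob \<beta> (n*m) (tri_prescr x i y j z l) \<le> W * ideal_triangle \<beta> * exp (error_const \<beta> m / real a)"
    unfolding T_def .
  have eD: "exp (- decoupling_const \<beta> 3 / real a) = exp (- Dc)" unfolding Dc_def by simp
  have "- error_const \<beta> m / real a = (- \<delta>) + (- Dc)" unfolding minus_divide_left[symmetric] K by simp
  then have eK: "exp (- error_const \<beta> m / real a) = exp (- \<delta>) * exp (- Dc)" by (simp only: exp_add)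
  have "W * T * exp (- error_const \<beta> m / real a) = W * (T * exp (- \<delta>)) * exp (- Dc)"
    unfolding eK by (simp only: mult.assoc)
  also have "\<dots> \<le> W * P * exp (- Dc)"
    by (rule mult_right_mono[OF mult_left_mono[OF TP(2) W0] exp_ge_zero])
  also have "\<dots> \<le> prescr_prob \<beta> (n*m) (tri_prescr x i y j z l)"
    using pb(2) unfolding eD .
  finally show "W * ideal_triangle \<beta> * exp (- error_const \<beta> m / real a) \<le> prescr_prob \<beta> (n*m) (tri_prescr x i y j z l)"
    unfolding T_def .
qed

lemma ideal_sum:
  assumes b: "\<beta> > 0"
  shows "(\<Sum>x\<in>B. \<Sum>y\<in>C. \<Sum>z\<in>C - {y}. \<Sum>i\<in>A. \<Sum>j\<in>B. \<Sum>l\<in>A.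
           ((1 + \<beta>)^3 + of_bool (i = l) * (1 + \<beta>)^2) * ideal_triangle \<beta>)
       = main_term \<beta> m a b c"
proof -
  define T where "T = ideal_triangle \<beta>"
  define q where "q = real m * (1 + \<beta>)^3 + (1 + \<beta>)^2"
  have inner: "(\<Sum>l\<in>A. ((1 + \<beta>)^3 + of_bool (i = l) * (1 + \<beta>)^2) * T) = q * T" if "i \<in> A" for i
  proof -
    have "(\<Sum>l\<in>A. ((1 + \<beta>)^3 + of_bool (i = l) * (1 + \<beta>)^2) * T)
        = (\<Sum>l\<in>A. (1 + \<beta>)^3 * T + (if i = l then (1 + \<beta>)^2 * T else 0))"
      by (intro sum.cong) (auto simp: algebra_simps)
    also have "\<dots> = real m * (1 + \<beta>)^3 * T + (1 + \<beta>)^2 * T"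
      using that card_blocks by (simp add: sum.distrib sum.delta A_def)
    finally show ?thesis unfolding q_def by (simp add: algebra_simps)
  qed
  have cz: "card (C - {y}) = m - 1" if "y \<in> C" for y using that card_blocks by (simp add: C_def)
  have "(\<Sum>x\<in>B. \<Sum>y\<in>C. \<Sum>z\<in>C - {y}. \<Sum>i\<in>A. \<Sum>j\<in>B. \<Sum>l\<in>A. ((1 + \<beta>)^3 + of_bool (i = l) * (1 + \<beta>)^2) * T)
      = (\<Sum>x\<in>B. \<Sum>y\<in>C. \<Sum>z\<in>C - {y}. \<Sum>i\<in>A. \<Sum>j\<in>B. q * T)"
    by (intro sum.cong refl) (simp add: inner)
  also have "\<dots> = real m * (real m * (real (m-1) * (real m * (real m * (q * T)))))"
    by (simp add: card_blocks cz)
  also have "\<dots> = main_term \<beta> m a b c"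
  proof -
    have m1': "real (m - 1) = real m - 1" using m1 by (simp add: of_nat_diff)
    have bb: "(2 + \<beta>)^3 \<noteq> 0" using b by simp
    have "main_term \<beta> m a b c = real m * (real m - 1) * q / (2 + \<beta>)^3 * (T * ((2 + \<beta>)^3 * real m^3))"
      unfolding main_term_def T_def ideal_triangle_eq[OF b] q_def
      using main_coefficient_identity[of \<beta> "real m"] b by simp
    also have "\<dots> = real m * (real m * ((real m - 1) * (real m * (real m * (q * T)))))"
      using bb by (simp add: field_simps power3_eq_cube)
    finally show ?thesis unfolding m1' by simp
  qed
  finally show ?thesis unfolding T_def .
qed

lemma expected_triangles_estimate:
  assumes b: "\<beta> > 0"
  shows "\<bar>expected_triangles \<beta> m n a b c - main_term \<beta> m a b c\<bar>
       \<le> error_const \<beta> m * exp (error_const \<beta> m) * main_term \<beta> m a b c / real a"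
proof -
  define K where "K = error_const \<beta> m"
  have "\<bar>(\<Sum>x\<in>B. \<Sum>y\<in>C. \<Sum>z\<in>C - {y}. \<Sum>i\<in>A. \<Sum>j\<in>B. \<Sum>l\<in>A. prescr_prob \<beta> (n*m) (tri_prescr x i y j z l))
     - (\<Sum>x\<in>B. \<Sum>y\<in>C. \<Sum>z\<in>C - {y}. \<Sum>i\<in>A. \<Sum>j\<in>B. \<Sum>l\<in>A. ((1 + \<beta>)^3 + of_bool (i = l) * (1 + \<beta>)^2) * ideal_triangle \<beta>)\<bar>
     \<le> K * exp K / real a * (\<Sum>x\<in>B. \<Sum>y\<in>C. \<Sum>z\<in>C - {y}. \<Sum>i\<in>A. \<Sum>j\<in>B. \<Sum>l\<in>A.
          ((1 + \<beta>)^3 + of_bool (i = l) * (1 + \<beta>)^2) * ideal_triangle \<beta>)"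
  proof (intro sum_relative_error)
    fix x y z i j l assume "x \<in> B" "y \<in> C" "z \<in> C - {y}" "i \<in> A" "j \<in> B" "l \<in> A"
    then have idx: "triangle_index x y z i j l" by auto
    have "(1 + \<beta>)^3 + of_bool (i = l) * (1 + \<beta>)^2 \<ge> 0" using b by simp
    then have "((1 + \<beta>)^3 + of_bool (i = l) * (1 + \<beta>)^2) * ideal_triangle \<beta> \<ge> 0"
      using ideal_triangle_pos[OF b] by simp
    from exp_bounds_imp_relative_error[OF this error_const_nonneg[OF b m1]] a1 prescr_prob_tri_bounds[OF b idx]
    show "\<bar>prescr_prob \<beta> (n*m) (tri_prescr x i y j z l) - ((1 + \<beta>)^3 + of_bool (i = l) * (1 + \<beta>)^2) * ideal_triangle \<beta>\<bar>
       \<le> K * exp K / real a * (((1 + \<beta>)^3 + of_bool (i = l) * (1 + \<beta>)^2) * ideal_triangle \<beta>)"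
      unfolding K_def by (simp add: algebra_simps)
  qed
  then show ?thesis
    unfolding expected_triangles_sum[OF b, symmetric] ideal_sum[OF b] K_def by (simp add: algebra_simps)
qed

end

theorem mainTheorem3:
  fixes \<beta> :: real and m :: nat
  assumes "\<beta> > 0" and "m \<ge> 1"
  shows "\<exists>C. \<forall>n a b c :: nat. 1 \<le> a \<longrightarrow> a < b \<longrightarrow> b < c \<longrightarrow> c \<le> n \<longrightarrow>
           \<bar>expected_triangles \<beta> m n a b c - main_term \<beta> m a b c\<bar>
             \<le> C * main_term \<beta> m a b c / real a"
proof (intro exI allI impI)
  fix n a b c :: nat
  assume "1 \<le> a" "a < b" "b < c" "c \<le> n"
  then interpret vertex_triple m n a b c using assms by unfold_locales
  show "\<bar>expected_triangles \<beta> m n a b c - main_term \<beta> m a b c\<bar>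
      \<le> error_const \<beta> m * exp (error_const \<beta> m) * main_term \<beta> m a b c / real a"
    by (rule expected_triangles_estimate[OF assms(1)])
qed

end
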